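(* Let $(\mathrm{LinearP})$ be the problem $$\min\Big\{\mathbf{f}^\top\mathbf{x}+\sum_{s\in S}p_s\mathbf{q}_s^\top\mathbf{y}_s : A\mathbf{x}\le\mathbf{b},\ \mathbf{x}\in\mathbb{R}^{n_1}_+,\ \mathbf{y}_s\in\mathbb{R}^{n_2}_+,\ T_s\mathbf{x}+W_s\mathbf{y}_s\ge\mathbf{h}_s\ \forall s,\ \operatorname{CVaR}_\alpha(\mathbf{c}^\top\hat{\mathbf{G}}(\mathbf{x},\mathbf{y}))\le\operatorname{CVaR}_\alpha(\mathbf{c}^\top\mathbf{Z})\ \forall\mathbf{c}\in\mathcal{C}\Big\}$$ and $(\mathrm{LinearD})$ the problem of maximizing $$-\int_{\mathcal{C}}\operatorname{CVaR}_\alpha(\mathbf{c}^\top\mathbf{Z})\,\mu(\mathrm{d}\mathbf{c})-\boldsymbol\lambda^\top\mathbf{b}+\sum_{s\in S}p_s\boldsymbol\pi_s^\top\mathbf{h}_s$$ over $\boldsymbol\lambda\in\mathbb{R}^{m_1}_+$, $\mu\in\mathcal{M}^F_+(\mathcal{C})$, $\nu:\Omega\to\mathcal{M}^F_+(\mathcal{C})$, $\boldsymbol\pi_s\in\mathbb{R}^{m_2}_+$ ($s\in S$) subject to: (1) $\sum_{s}p_s\nu(\omega_s)=\mu$; (2) $\nu(\omega_s)\le\frac{\mu}{1-\alpha}$ (setwise) for all $s\in S$; (3) $\sum_s p_s\boldsymbol\pi_s^\top T_s-\sum_s p_s\int_{\mathcal{C}}\mathbf{c}^\top\bar{\mathbf{g}}_s\,[\nu(\omega_s)](\mathrm{d}\mathbf{c})\le\mathbf{f}^\top+\boldsymbol\lambda^\top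 A$; (4) $\boldsymbol\pi_s^\top W_s-\int_{\mathcal{C}}\mathbf{c}^\top\tilde{\mathbf{g}}_s\,[\nu(\omega_s)](\mathrm{d}\mathbf{c})\le\mathbf{q}_s^\top$ for all $s\in S$. Then $(\mathrm{LinearP})$ has a finite optimum value if and only if $(\mathrm{LinearD})$ does, in which case the two optimum values coincide. Moreover, a feasible solution $(\mathbf{x},\mathbf{y})$ of $(\mathrm{LinearP})$ and a feasible solution $(\boldsymbol\lambda,\mu,\nu,\boldsymbol\pi)$ of $(\mathrm{LinearD})$ are both optimal if and only if: (i) $\operatorname{support}(\mu)\subset\{\mathbf{c}:\operatorname{CVaR}_\alpha(\mathbf{c}^\top\hat{\mathbf{G}}(\mathbf{x},\mathbf{y}))=\operatorname{CVaR}_\alpha(\mathbf{c}^\top\mathbf{Z})\}$; (ii) $\operatorname{support}(\nu(\omega_s))\subset\{\mathbf{c}:\operatorname{VaR}_\alpha(\mathbf{c}^\top\hat{\mathbf{G}}(\mathbf{x},\mathbf{y}))\le\mathbf{c}^\top\hat{\mathbf{g}}_s(\mathbf{x},\mathbf{y}_s)\}$ for all $s\in S$; (iii) $\operatorname{support}(\frac{\mu}{1-\alpha}-\nu(\omega_s))\subset\{\mathbf{c}:\operatorname{VaR}_\alpha(\mathbf{c}^\top\hat{\mathbf{G}}(\mathbf{x},\mathbf{y}))\ge\mathbf{c}^\top\hat{\mathbf{g}}_s(\mathbf{x},\mathbf{y}_s)\}$ for all $s\in S$; (iv) $\boldsymbol\lambda^\top(\mathbf{b}-A\mathbf{x})=0$;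 (v) $\boldsymbol\pi_s^\top(T_s\mathbf{x}+W_s\mathbf{y}_s-\mathbf{h}_s)=0$ for all $s\in S$; (vi) $\big(\mathbf{f}^\top+\boldsymbol\lambda^\top A-\sum_sp_s\boldsymbol\pi_s^\top T_s+\sum_sp_s\int_{\mathcal{C}}\mathbf{c}^\top\bar{\mathbf{g}}_s\,[\nu(\omega_s)](\mathrm{d}\mathbf{c})\big)\mathbf{x}=0$; (vii) $\big(\mathbf{q}_s^\top-\boldsymbol\pi_s^\top W_s+\int_{\mathcal{C}}\mathbf{c}^\top\tilde{\mathbf{g}}_s\,[\nu(\omega_s)](\mathrm{d}\mathbf{c})\big)\mathbf{y}_s=0$ for all $s\in S$.
   Context: Finite probability space $\Omega=\{\omega_1,\dots,\omega_m\}$, $\Pi(\omega_s)=p_s>0$, $S=\{1,\dots,m\}$; smaller values are preferred. $\operatorname{CVaR}_\alpha(V)=\min_{\eta\in\mathbb{R}}\{\eta+\frac{1}{1-\alpha}\mathbb{E}[(V-\eta)_+]\}$ for $\alpha\in[0,1)$; $\operatorname{VaR}_\alpha(V)=\min\{t:\Pi(V\le t)\ge\alpha\}$. Benchmark $\mathbf{Z}$: random vector in $\mathbb{R}^d$ with finitely many realizations. $\mathcal{C}$: nonempty polyhedron contained in the unit simplex of $\mathbb{R}^d$. $\mathcal{M}^F_+(\mathcal{C})$: the set of finitely supported finite nonnegative measures on $\mathcal{C}$; for such $\mu$, $\operatorname{support}(\mu)=\{\mathbf{c}\in\mathcal{C}:\mu(\{\mathbf{c}\})>0\}$ and $\int_{\mathcal{C}}u(\mathbf{c})\mu(\mathrm{d}\mathbf{c})=\sum_{\mathbf{c}\in\operatorname{support}(\mu)}u(\mathbf{c})\mu(\{\mathbf{c}\})$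 (for vector-valued $u$, componentwise). Data: $A\in\mathbb{R}^{m_1\times n_1}$, $\mathbf{b}\in\mathbb{R}^{m_1}$, $\mathbf{f}\in\mathbb{R}^{n_1}$; for each $s$: $\mathbf{q}_s\in\mathbb{R}^{n_2}$, $T_s\in\mathbb{R}^{m_2\times n_1}$, $W_s\in\mathbb{R}^{m_2\times n_2}$, $\mathbf{h}_s\in\mathbb{R}^{m_2}$, $\bar{\mathbf{g}}_s\in\mathbb{R}^{d\times n_1}$, $\tilde{\mathbf{g}}_s\in\mathbb{R}^{d\times n_2}$, $\hat{\mathbf{g}}_s(\mathbf{x},\mathbf{y}_s)=\bar{\mathbf{g}}_s\mathbf{x}+\tilde{\mathbf{g}}_s\mathbf{y}_s$. $\hat{\mathbf{G}}(\mathbf{x},\mathbf{y})$ is the random vector with value $\hat{\mathbf{g}}_s(\mathbf{x},\mathbf{y}_s)$ at $\omega_s$. *)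

theory Defs
  imports "HOL-Analysis.Analysis"
begin

text \<open>Random variables on a finite probability space with weights P (indexed by a finite type)
  are functions on that type. CVaR exactly as in the paper (the minimum is an infimum, attained).\<close>
definition cvar :: "('a::finite \<Rightarrow> real) \<Rightarrow> real \<Rightarrow> ('a \<Rightarrow> real) \<Rightarrow> real" where
  "cvar P \<alpha> V = Inf ((\<lambda>\<eta>. \<eta> + (1 / (1 - \<alpha>)) * (\<Sum>s\<in>UNIV. P s * max (V s - \<eta>) 0)) ` UNIV)"

text \<open>VaR: min {t. Prob(V \<le> t) \<ge> \<alpha>}, taken in the extended reals (equals -\<infinity> when \<alpha> = 0).\<close>
definition var :: "('a::finite \<Rightarrow> real) \<Rightarrow> real \<Rightarrow> ('a \<Rightarrow> real) \<Rightarrow> ereal" where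
  "var P \<alpha> V = Inf {ereal t | t. \<alpha> \<le> (\<Sum>s\<in>{s. V s \<le> t}. P s)}"

definition unit_simplex :: "(real^'d) set" where
  "unit_simplex = {c. (\<forall>i. 0 \<le> c $ i) \<and> (\<Sum>i\<in>UNIV. c $ i) = 1}"

text \<open>Finitely supported measures on a set C, represented by their point masses.\<close>
definition fsupp :: "('a \<Rightarrow> real) \<Rightarrow> 'a set" where
  "fsupp \<mu> = {c. \<mu> c \<noteq> 0}"

definition fin_meas :: "'a set \<Rightarrow> ('a \<Rightarrow> real) \<Rightarrow> bool" where
  "fin_meas C \<mu> \<longleftrightarrow> (\<forall>c. 0 \<le> \<mu> c) \<and> finite (fsupp \<mu>) \<and> fsupp \<mu> \<subseteq> C"

definition msr :: "('a \<Rightarrow> real) \<Rightarrow> 'a set \<Rightarrow> real" where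
  "msr \<mu> B = sum \<mu> (B \<inter> fsupp \<mu>)"

definition support :: "'a set \<Rightarrow> ('a \<Rightarrow> real) \<Rightarrow> 'a set" where
  "support C \<mu> = {c \<in> C. \<mu> c > 0}"

definition fint :: "('a \<Rightarrow> real) \<Rightarrow> ('a \<Rightarrow> 'b::real_vector) \<Rightarrow> 'b" where
  "fint \<mu> u = (\<Sum>c\<in>fsupp \<mu>. \<mu> c *\<^sub>R u c)"

definition ghat :: "('s \<Rightarrow> real^'n1^'d) \<Rightarrow> ('s \<Rightarrow> real^'n2^'d) \<Rightarrow> real^'n1 \<Rightarrow> ('s \<Rightarrow> real^'n2) \<Rightarrow> 's \<Rightarrow> real^'d" where
  "ghat gbar gtil x y s = gbar s *v x + gtil s *v y s"

text \<open>Feasible set of (LinearP). p: scenario probabilities; (qZ, z): distribution of benchmark Z.\<close>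
definition feasP ::
  "('s::finite \<Rightarrow> real) \<Rightarrow> real \<Rightarrow> (real^'d) set \<Rightarrow> ('k::finite \<Rightarrow> real) \<Rightarrow> ('k \<Rightarrow> real^'d)
   \<Rightarrow> real^'n1^'m1 \<Rightarrow> real^'m1 \<Rightarrow> ('s \<Rightarrow> real^'n1^'m2) \<Rightarrow> ('s \<Rightarrow> real^'n2^'m2) \<Rightarrow> ('s \<Rightarrow> real^'m2)
   \<Rightarrow> ('s \<Rightarrow> real^'n1^'d) \<Rightarrow> ('s \<Rightarrow> real^'n2^'d) \<Rightarrow> ((real^'n1) \<times> ('s \<Rightarrow> real^'n2)) set" where
  "feasP p \<alpha> C qZ z A b T W h gbar gtil =
    {(x, y). (\<forall>i. (A *v x) $ i \<le> b $ i) \<and> (\<forall>j. 0 \<le> x $ j) \<and> (\<forall>s j. 0 \<le> y s $ j)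
       \<and> (\<forall>s i. h s $ i \<le> (T s *v x + W s *v y s) $ i)
       \<and> (\<forall>c\<in>C. cvar p \<alpha> (\<lambda>s. c \<bullet> ghat gbar gtil x y s) \<le> cvar qZ \<alpha> (\<lambda>k. c \<bullet> z k))}"

definition objP :: "('s::finite \<Rightarrow> real) \<Rightarrow> real^'n1 \<Rightarrow> ('s \<Rightarrow> real^'n2)
   \<Rightarrow> ((real^'n1) \<times> ('s \<Rightarrow> real^'n2)) \<Rightarrow> real" where
  "objP p f q xy = f \<bullet> fst xy + (\<Sum>s\<in>UNIV. p s * (q s \<bullet> snd xy s))"

definition feasD ::
  "('s::finite \<Rightarrow> real) \<Rightarrow> real \<Rightarrow> (real^'d) set
   \<Rightarrow> real^'n1^'m1 \<Rightarrow> real^'n1 \<Rightarrow> ('s \<Rightarrow> real^'n2) \<Rightarrow> ('s \<Rightarrow> real^'n1^'m2) \<Rightarrow> ('s \<Rightarrow> real^'n2^'m2)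
   \<Rightarrow> ('s \<Rightarrow> real^'n1^'d) \<Rightarrow> ('s \<Rightarrow> real^'n2^'d)
   \<Rightarrow> ((real^'m1) \<times> (real^'d \<Rightarrow> real) \<times> ('s \<Rightarrow> real^'d \<Rightarrow> real) \<times> ('s \<Rightarrow> real^'m2)) set" where
  "feasD p \<alpha> C A f q T W gbar gtil =
    {(lam, mu, nu, piv).
       (\<forall>i. 0 \<le> lam $ i) \<and> fin_meas C mu \<and> (\<forall>s. fin_meas C (nu s)) \<and> (\<forall>s i. 0 \<le> piv s $ i)
     \<and> (\<forall>B\<subseteq>C. (\<Sum>s\<in>UNIV. p s * msr (nu s) B) = msr mu B)
     \<and> (\<forall>s. \<forall>B\<subseteq>C. msr (nu s) B \<le> msr mu B / (1 - \<alpha>))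
     \<and> (\<forall>j. ((\<Sum>s\<in>UNIV. p s *\<^sub>R (piv s v* T s))
              - (\<Sum>s\<in>UNIV. p s *\<^sub>R fint (nu s) (\<lambda>c. c v* gbar s))) $ j
            \<le> (f + lam v* A) $ j)
     \<and> (\<forall>s j. (piv s v* W s - fint (nu s) (\<lambda>c. c v* gtil s)) $ j \<le> q s $ j)}"

definition objD :: "('s::finite \<Rightarrow> real) \<Rightarrow> real \<Rightarrow> ('k::finite \<Rightarrow> real) \<Rightarrow> ('k \<Rightarrow> real^'d)
   \<Rightarrow> real^'m1 \<Rightarrow> ('s \<Rightarrow> real^'m2)
   \<Rightarrow> ((real^'m1) \<times> (real^'d \<Rightarrow> real) \<times> ('s \<Rightarrow> real^'d \<Rightarrow> real) \<times> ('s \<Rightarrow> real^'m2)) \<Rightarrow> real" where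
  "objD p \<alpha> qZ z b h D = (case D of (lam, mu, nu, piv) \<Rightarrow>
     - fint mu (\<lambda>c. cvar qZ \<alpha> (\<lambda>k. c \<bullet> z k)) - lam \<bullet> b + (\<Sum>s\<in>UNIV. p s * (piv s \<bullet> h s)))"

end

theory Submission
  imports Defs
begin

text \<open>CVaR is the largest expectation over a polytope of densities, its risk
  envelope. Hence on each cell of \<open>C\<close> where a fixed vertex of the envelope of \<open>Z\<close> is optimal,
  the benchmark side of the constraint is linear in \<open>c\<close>, and (LinearP) is equivalent to a finite
  linear program whose rows are the linear constraints together with one cut for every pair of a
  vertex of a cell and a vertex of the envelope of \<open>p\<close>. Farkas' lemma applied to this LP produces
  the multipliers of the cuts, which assemble into the finitely supported measures \<open>\<mu>\<close> and \<open>\<nu>\<close>.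
  Conversely, for any feasible pair the duality gap splits into nonnegative terms; the one
  coming from the CVaR constraints vanishes exactly when \<open>\<nu>/\<mu>\<close> is an optimal envelope point,
  which is characterised by the VaR, and this gives the optimality conditions.\<close>

lemma sum_UNIV_Plus:
  fixes F :: "'a::finite + 'b::finite \<Rightarrow> 'c::comm_monoid_add"
  shows "(\<Sum>i\<in>UNIV. F i) = (\<Sum>s\<in>UNIV. F (Inl s)) + (\<Sum>s\<in>UNIV. F (Inr s))"
  by (subst UNIV_Plus_UNIV[symmetric], subst sum.Plus) auto

lemma sum_mult_indicator:
  fixes P :: "'a::finite \<Rightarrow> real"
  shows "(\<Sum>s\<in>UNIV. P s * (if Q s then d else 0)) = d * sum P {s. Q s}"
proof -
  have "(\<Sum>s\<in>UNIV. P s * (if Q s then d else 0)) = (\<Sum>s\<in>UNIV. if Q s then P s * d else 0)"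
    by (rule sum.cong) auto
  also have "\<dots> = (\<Sum>s\<in>{s. Q s}. P s * d)"
    using sum.inter_filter[of "UNIV::'a set" "\<lambda>s. P s * d" Q] by simp
  also have "\<dots> = d * sum P {s. Q s}" by (simp add: sum_distrib_left mult.commute)
  finally show ?thesis .
qed

lemma sum_Collect_not:
  fixes P :: "'a::finite \<Rightarrow> real"
  shows "sum P {s. \<not> Q s} = sum P UNIV - sum P {s. Q s}"
proof -
  have "sum P UNIV = sum P {s. Q s} + sum P {s. \<not> Q s}"
    by (subst sum.union_disjoint[symmetric]) (auto intro: sum.cong)
  then show ?thesis by simp
qed

lemma sum_if_eq_outer:
  fixes g :: "'z \<Rightarrow> 'v::comm_monoid_add"
  shows "(\<Sum>x\<in>(UNIV::'q::finite set). \<Sum>z\<in>B. if x = s then g z else 0) = (\<Sum>z\<in>B. g z)"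
proof -
  have "(\<Sum>x\<in>(UNIV::'q set). \<Sum>z\<in>B. if x = s then g z else 0)
      = (\<Sum>x\<in>(UNIV::'q set). if x = s then (\<Sum>z\<in>B. g z) else 0)"
    by (rule sum.cong) auto
  then show ?thesis by simp
qed

lemma inner_nonneg_if_components_nonneg:
  fixes u v :: "real^'n::finite"
  shows "(\<And>i. 0 \<le> u$i) \<Longrightarrow> (\<And>i. 0 \<le> v$i) \<Longrightarrow> 0 \<le> u \<bullet> v"
  unfolding inner_vec_def by (auto intro!: sum_nonneg)

lemma vector_matrix_mult_eq_sum_rows:
  "(v::real^'m::finite) v* (M::real^'n::finite^'m) = (\<Sum>r\<in>UNIV. v$r *\<^sub>R M$r)"
  by (simp add: vec_eq_iff vector_matrix_mult_def sum_component mult.commute)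

lemma sum_scaled_axis: "(\<Sum>j\<in>UNIV. a j *\<^sub>R axis j (1::real)) = (\<chi> j. a j)"
proof -
  have "(\<Sum>j\<in>UNIV. a j * (if i = j then 1 else 0)) = a i" for i :: 'a
  proof -
    have "(\<Sum>j\<in>UNIV. a j * (if i = j then 1 else 0)) = (\<Sum>j\<in>UNIV. if j = i then a j else 0)"
      by (rule sum.cong) auto
    then show ?thesis by simp
  qed
  then show ?thesis by (simp add: vec_eq_iff sum_component axis_def)
qed

lemma convex_hull_inner_le_generator:
  fixes c :: "'a::real_inner"
  assumes "w \<in> convex hull E"
  shows "\<exists>e\<in>E. c \<bullet> w \<le> c \<bullet> e"
proof (rule ccontr)
  assume "\<not> (\<exists>e\<in>E. c \<bullet> w \<le> c \<bullet> e)"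
  then have "convex hull E \<subseteq> {u. c \<bullet> u < c \<bullet> w}"
    by (intro hull_minimal) (auto simp: convex_halfspace_lt)
  with assms show False by auto
qed

lemma polytope_vertices_exist: "polytope S \<Longrightarrow> \<exists>E. finite E \<and> convex hull E = S"
  unfolding polytope_def by metis

lemma bounded_unit_simplex: "bounded (unit_simplex :: (real^'d::finite) set)"
proof (rule bounded_subset[OF bounded_cbox[of 0 "\<chi> i. 1"]])
  show "unit_simplex \<subseteq> cbox 0 ((\<chi> i. 1) :: real^'d)"
  proof
    fix c :: "real^'d" assume "c \<in> unit_simplex"
    then have c: "\<And>i. 0 \<le> c$i" "(\<Sum>i\<in>UNIV. c$i) = 1" by (auto simp: unit_simplex_def)
    have "c$i \<le> 1" for i using member_le_sum[of i UNIV "\<lambda>i. c$i"] c by auto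
    with c show "c \<in> cbox 0 ((\<chi> i. 1) :: real^'d)" by (auto simp: mem_box_cart)
  qed
qed

section \<open>Farkas' lemma\<close>

lemma nonneg_combination_if_in_convex_cone_hull:
  fixes g :: "'i \<Rightarrow> 'a::real_vector"
  assumes "finite I" and "v \<in> convex_cone hull (g ` I)"
  shows "\<exists>y. (\<forall>i\<in>I. 0 \<le> y i) \<and> v = (\<Sum>i\<in>I. y i *\<^sub>R g i)"
proof -
  let ?K = "{v. \<exists>y. (\<forall>i\<in>I. 0 \<le> y i) \<and> v = (\<Sum>i\<in>I. y i *\<^sub>R g i)}"
  have "convex_cone ?K"
    unfolding convex_cone_iff
  proof (intro conjI ballI allI impI)
    show "0 \<in> ?K" by (auto intro!: exI[of _ "\<lambda>_. 0"])
  next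
    fix u v assume "u \<in> ?K" "v \<in> ?K"
    then obtain y1 y2 where "\<forall>i\<in>I. 0 \<le> y1 i" "u = (\<Sum>i\<in>I. y1 i *\<^sub>R g i)"
      "\<forall>i\<in>I. 0 \<le> y2 i" "v = (\<Sum>i\<in>I. y2 i *\<^sub>R g i)" by auto
    then show "u + v \<in> ?K"
      by (intro CollectI exI[of _ "\<lambda>i. y1 i + y2 i"]) (auto simp: scaleR_add_left sum.distrib)
  next
    fix u and c :: real assume "u \<in> ?K" "0 \<le> c"
    then obtain y where "\<forall>i\<in>I. 0 \<le> y i" "u = (\<Sum>i\<in>I. y i *\<^sub>R g i)" by auto
    with \<open>0 \<le> c\<close> show "c *\<^sub>R u \<in> ?K"
      by (intro CollectI exI[of _ "\<lambda>i. c * y i"]) (auto simp: scaleR_sum_right)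
  qed
  moreover have "g ` I \<subseteq> ?K"
  proof
    fix v assume "v \<in> g ` I"
    then obtain j where j: "j \<in> I" "v = g j" by auto
    have "(\<Sum>i\<in>I. (if i = j then 1 else 0) *\<^sub>R g i) = g j"
      using assms(1) j by (simp add: if_distrib[of "\<lambda>r. r *\<^sub>R _"] cong: if_cong)
    with j show "v \<in> ?K" by (intro CollectI exI[of _ "\<lambda>i. if i = j then 1 else 0"]) auto
  qed
  ultimately have "convex_cone hull (g ` I) \<subseteq> ?K" by (rule hull_minimal[rotated])
  with assms(2) show ?thesis by blast
qed

lemma farkas_cone:
  fixes g :: "'i \<Rightarrow> 'a::euclidean_space"
  assumes fin: "finite I" and dual: "\<And>a. \<forall>i\<in>I. 0 \<le> a \<bullet> g i \<Longrightarrow> 0 \<le> a \<bullet> t"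
  shows "\<exists>y. (\<forall>i\<in>I. 0 \<le> y i) \<and> t = (\<Sum>i\<in>I. y i *\<^sub>R g i)"
proof (rule nonneg_combination_if_in_convex_cone_hull[OF fin], rule ccontr)
  let ?K = "convex_cone hull (g ` I)"
  assume "t \<notin> ?K"
  moreover have "closed ?K" using fin by (simp add: closed_convex_cone_hull)
  ultimately obtain a b where ab: "a \<bullet> t < b" "\<forall>x\<in>?K. b < a \<bullet> x"
    using separating_hyperplane_closed_point[OF convex_convex_cone_hull] by blast
  have b: "b < 0" using ab(2) convex_cone_hull_contains_0 by fastforce
  \<comment> \<open>\<open>?K\<close> is a cone, so a functional bounded below on it is nonnegative on it\<close>
  have "0 \<le> a \<bullet> g i" if i: "i \<in> I" for i
  proof (rule ccontr)
    assume "\<not> 0 \<le> a \<bullet> g i"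
    then have neg: "a \<bullet> g i < 0" by simp
    have "(b / (a \<bullet> g i)) *\<^sub>R g i \<in> ?K"
      using neg b i by (intro convex_cone_hull_mul hull_inc) (auto simp: divide_nonpos_neg)
    then have "b < a \<bullet> ((b / (a \<bullet> g i)) *\<^sub>R g i)" using ab(2) by blast
    with neg show False by simp
  qed
  then have "0 \<le> a \<bullet> t" using dual by blast
  with ab(1) b show False by simp
qed

lemma farkas_inhomogeneous:
  fixes a :: "'i \<Rightarrow> 'v::euclidean_space" and b :: "'i \<Rightarrow> real"
  assumes fin: "finite I"
    and dual: "\<And>u \<tau>. \<tau> \<le> 0 \<Longrightarrow> \<forall>i\<in>I. 0 \<le> u \<bullet> a i + \<tau> * b i \<Longrightarrow> 0 \<le> u \<bullet> g + \<tau> * m"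
  shows "\<exists>y. (\<forall>i\<in>I. 0 \<le> y i) \<and> (\<Sum>i\<in>I. y i *\<^sub>R a i) = g \<and> m \<le> (\<Sum>i\<in>I. y i * b i)"
proof -
  define J where "J = insert None (Some ` I)"
  define G where "G j = (case j of Some i \<Rightarrow> (a i, b i) | None \<Rightarrow> (0, -1))" for j
  have "\<exists>y. (\<forall>j\<in>J. 0 \<le> y j) \<and> (g, m) = (\<Sum>j\<in>J. y j *\<^sub>R G j)"
  proof (rule farkas_cone)
    show "finite J" using fin by (simp add: J_def)
    fix w :: "'v \<times> real" assume "\<forall>j\<in>J. 0 \<le> w \<bullet> G j"
    then have "snd w \<le> 0" "\<forall>i\<in>I. 0 \<le> fst w \<bullet> a i + snd w * b i"
      by (auto simp: J_def G_def inner_prod_def)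
    from dual[OF this] show "0 \<le> w \<bullet> (g, m)" by (simp add: inner_prod_def)
  qed
  then obtain y where y: "\<forall>j\<in>J. 0 \<le> y j"
    and "(g, m) = y None *\<^sub>R (0, -1) + (\<Sum>i\<in>I. y (Some i) *\<^sub>R (a i, b i))"
    using fin by (auto simp: J_def G_def sum.reindex)
  then have "g = (\<Sum>i\<in>I. y (Some i) *\<^sub>R a i)" "m = - y None + (\<Sum>i\<in>I. y (Some i) * b i)"
    by (simp_all add: prod_eq_iff fst_sum snd_sum)
  moreover have "0 \<le> y None" using y by (simp add: J_def)
  ultimately show ?thesis using y by (intro exI[of _ "\<lambda>i. y (Some i)"]) (auto simp: J_def)
qed

lemma farkas_bounded_below:
  fixes a :: "'i \<Rightarrow> 'v::euclidean_space" and b :: "'i \<Rightarrow> real"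
  assumes fin: "finite I" and feasible: "\<forall>i\<in>I. b i \<le> a i \<bullet> w"
    and bounded: "\<And>v. \<forall>i\<in>I. b i \<le> a i \<bullet> v \<Longrightarrow> m \<le> g \<bullet> v"
  shows "\<exists>y. (\<forall>i\<in>I. 0 \<le> y i) \<and> (\<Sum>i\<in>I. y i *\<^sub>R a i) = g \<and> m \<le> (\<Sum>i\<in>I. y i * b i)"
proof (rule farkas_inhomogeneous[OF fin])
  fix u and \<tau> :: real
  assume "\<tau> \<le> 0" and u: "\<forall>i\<in>I. 0 \<le> u \<bullet> a i + \<tau> * b i"
  show "0 \<le> u \<bullet> g + \<tau> * m"
  proof (cases "\<tau> = 0")
    case True
    \<comment> \<open>\<open>u\<close> is a recession direction of the polyhedron, along which \<open>g\<close> cannot decrease\<close>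
    have "0 \<le> g \<bullet> u"
    proof (rule ccontr)
      assume "\<not> 0 \<le> g \<bullet> u"
      define r where "r = (\<bar>m\<bar> + \<bar>g \<bullet> w\<bar> + 1) / - (g \<bullet> u)"
      have "0 \<le> r" using \<open>\<not> 0 \<le> g \<bullet> u\<close> by (simp add: r_def divide_nonneg_neg)
      have "b i \<le> a i \<bullet> (w + r *\<^sub>R u)" if "i \<in> I" for i
        using feasible that u True \<open>0 \<le> r\<close>
        by (force simp: inner_add_right inner_commute intro: add_increasing2)
      then have "m \<le> g \<bullet> (w + r *\<^sub>R u)" using bounded by blast
      also have "\<dots> = g \<bullet> w - (\<bar>m\<bar> + \<bar>g \<bullet> w\<bar> + 1)"
        using \<open>\<not> 0 \<le> g \<bullet> u\<close> by (simp add: r_def inner_diff_right)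
      finally show False by linarith
    qed
    with True show ?thesis by (simp add: inner_commute)
  next
    case False
    with \<open>\<tau> \<le> 0\<close> have "\<tau> < 0" by simp
    have "b i \<le> a i \<bullet> ((1 / - \<tau>) *\<^sub>R u)" if "i \<in> I" for i
      using u that \<open>\<tau> < 0\<close> by (auto simp: field_simps inner_commute)
    then have "m \<le> g \<bullet> ((1 / - \<tau>) *\<^sub>R u)" using bounded by blast
    with \<open>\<tau> < 0\<close> show ?thesis by (simp add: field_simps inner_commute)
  qed
qed

lemma farkas_infeasible:
  fixes a :: "'i \<Rightarrow> 'v::euclidean_space" and b :: "'i \<Rightarrow> real"
  assumes fin: "finite I" and infeasible: "\<nexists>v. \<forall>i\<in>I. b i \<le> a i \<bullet> v"
  shows "\<exists>y. (\<forall>i\<in>I. 0 \<le> y i) \<and> (\<Sum>i\<in>I. y i *\<^sub>R a i) = 0 \<and> 0 < (\<Sum>i\<in>I. y i * b i)"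
proof -
  have "\<exists>y. (\<forall>i\<in>I. 0 \<le> y i) \<and> (\<Sum>i\<in>I. y i *\<^sub>R a i) = 0 \<and> 1 \<le> (\<Sum>i\<in>I. y i * b i)"
  proof (rule farkas_inhomogeneous[OF fin])
    fix u and \<tau> :: real
    assume "\<tau> \<le> 0" and u: "\<forall>i\<in>I. 0 \<le> u \<bullet> a i + \<tau> * b i"
    have "\<not> \<tau> < 0"
    proof
      assume "\<tau> < 0"
      then have "\<forall>i\<in>I. b i \<le> a i \<bullet> ((1 / - \<tau>) *\<^sub>R u)"
        using u by (auto simp: field_simps inner_commute)
      with infeasible show False by blast
    qed
    with \<open>\<tau> \<le> 0\<close> show "0 \<le> u \<bullet> 0 + \<tau> * 1" by simp
  qed
  then show ?thesis by force
qed

lemma fint_eq_sum_superset: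
  assumes "finite F" "fsupp \<mu> \<subseteq> F"
  shows "fint \<mu> u = (\<Sum>c\<in>F. \<mu> c *\<^sub>R u c)"
  unfolding fint_def by (rule sum.mono_neutral_left) (use assms in \<open>auto simp: fsupp_def\<close>)

lemma msr_eq_sum_superset:
  assumes "finite F" "fsupp \<mu> \<subseteq> F"
  shows "msr \<mu> B = (\<Sum>c\<in>B \<inter> F. \<mu> c)"
  unfolding msr_def by (rule sum.mono_neutral_left) (use assms in \<open>auto simp: fsupp_def\<close>)

lemma msr_singleton: "msr \<mu> {c} = \<mu> c"
  unfolding msr_def fsupp_def by (cases "\<mu> c = 0") auto

lemma fin_meas_vanishes_outside: "fin_meas C \<mu> \<Longrightarrow> c \<notin> C \<Longrightarrow> \<mu> c = 0"
  unfolding fin_meas_def fsupp_def by blast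

lemma mixture_msr_iff:
  fixes \<nu> :: "'s::finite \<Rightarrow> 'a \<Rightarrow> real"
  assumes \<mu>: "fin_meas C \<mu>" and \<nu>: "\<And>s. fin_meas C (\<nu> s)"
  shows "(\<forall>B\<subseteq>C. (\<Sum>s\<in>UNIV. p s * msr (\<nu> s) B) = msr \<mu> B) \<longleftrightarrow> (\<forall>c. (\<Sum>s\<in>UNIV. p s * \<nu> s c) = \<mu> c)"
proof
  assume H: "\<forall>B\<subseteq>C. (\<Sum>s\<in>UNIV. p s * msr (\<nu> s) B) = msr \<mu> B"
  show "\<forall>c. (\<Sum>s\<in>UNIV. p s * \<nu> s c) = \<mu> c"
  proof
    fix c show "(\<Sum>s\<in>UNIV. p s * \<nu> s c) = \<mu> c"
      using H[rule_format, of "{c}"] fin_meas_vanishes_outside[OF \<mu>] fin_meas_vanishes_outside[OF \<nu>]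
      by (cases "c \<in> C") (auto simp: msr_singleton)
  qed
next
  assume H: "\<forall>c. (\<Sum>s\<in>UNIV. p s * \<nu> s c) = \<mu> c"
  define F where "F = fsupp \<mu> \<union> (\<Union>s. fsupp (\<nu> s))"
  have F: "finite F" "fsupp \<mu> \<subseteq> F" "\<And>s. fsupp (\<nu> s) \<subseteq> F"
    using \<mu> \<nu> by (auto simp: F_def fin_meas_def)
  show "\<forall>B\<subseteq>C. (\<Sum>s\<in>UNIV. p s * msr (\<nu> s) B) = msr \<mu> B"
    using H by (simp add: msr_eq_sum_superset[OF F(1)] F(2,3) sum_distrib_left)
      (subst sum.swap, simp)
qed

lemma msr_le_iff:
  assumes \<mu>: "fin_meas C \<mu>" and \<nu>: "fin_meas C \<nu>"
  shows "(\<forall>B\<subseteq>C. msr \<nu> B \<le> msr \<mu> B / k) \<longleftrightarrow> (\<forall>c. \<nu> c \<le> \<mu> c / k)"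
proof
  assume H: "\<forall>B\<subseteq>C. msr \<nu> B \<le> msr \<mu> B / k"
  show "\<forall>c. \<nu> c \<le> \<mu> c / k"
  proof
    fix c show "\<nu> c \<le> \<mu> c / k"
      using H[rule_format, of "{c}"] fin_meas_vanishes_outside[OF \<mu>] fin_meas_vanishes_outside[OF \<nu>]
      by (cases "c \<in> C") (auto simp: msr_singleton)
  qed
next
  assume H: "\<forall>c. \<nu> c \<le> \<mu> c / k"
  have F: "finite (fsupp \<mu> \<union> fsupp \<nu>)" using \<mu> \<nu> by (simp add: fin_meas_def)
  show "\<forall>B\<subseteq>C. msr \<nu> B \<le> msr \<mu> B / k"
    using H by (simp add: msr_eq_sum_superset[OF F] sum_divide_distrib sum_mono)
qed

lemma fsupp_add_scaled: "fsupp (\<lambda>c. a c + t * b c) \<subseteq> fsupp a \<union> fsupp b"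
  unfolding fsupp_def by auto

lemma fin_meas_add_scaled:
  assumes "fin_meas C a" "fin_meas C b" "0 \<le> t"
  shows "fin_meas C (\<lambda>c. a c + t * b c)"
  using assms fsupp_add_scaled[of a t b] unfolding fin_meas_def by (auto intro: finite_subset)

lemma fint_add_scaled:
  assumes "finite (fsupp a)" "finite (fsupp b)"
  shows "fint (\<lambda>c. a c + t * b c) u = fint a u + t *\<^sub>R fint b u"
proof -
  have F: "finite (fsupp a \<union> fsupp b)" using assms by simp
  show ?thesis
    by (simp add: fint_eq_sum_superset[OF F] fsupp_add_scaled scaleR_add_left sum.distrib
        scaleR_sum_right)
qed

section \<open>CVaR, its risk envelope, and VaR\<close>

definition cvar_obj :: "('a::finite \<Rightarrow> real) \<Rightarrow> real \<Rightarrow> ('a \<Rightarrow> real) \<Rightarrow> real \<Rightarrow> real" where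
  "cvar_obj P \<alpha> V \<eta> = \<eta> + (1 / (1 - \<alpha>)) * (\<Sum>s\<in>UNIV. P s * max (V s - \<eta>) 0)"

lemma cvar_eq_Inf_cvar_obj: "cvar P \<alpha> V = Inf (range (cvar_obj P \<alpha> V))"
  by (simp add: cvar_def cvar_obj_def)

text \<open>CVaR is the largest expectation of \<open>V\<close> over this risk envelope.\<close>
definition cvar_envelope :: "('a::finite \<Rightarrow> real) \<Rightarrow> real \<Rightarrow> (real^'a) set" where
  "cvar_envelope P \<alpha> = {w. (\<forall>s. 0 \<le> w$s \<and> w$s \<le> P s / (1 - \<alpha>)) \<and> (\<Sum>s\<in>UNIV. w$s) = 1}"

lemma envelope_le_cvar_obj:
  assumes P: "\<And>s. 0 \<le> P s" and w: "w \<in> cvar_envelope P \<alpha>"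
  shows "(\<Sum>s\<in>UNIV. w$s * V s) \<le> cvar_obj P \<alpha> V \<eta>"
proof -
  have w_bounds: "0 \<le> w$s" "w$s \<le> P s / (1 - \<alpha>)" for s
    using w by (auto simp: cvar_envelope_def)
  have "(\<Sum>s\<in>UNIV. w$s * V s) = (\<Sum>s\<in>UNIV. w$s) * \<eta> + (\<Sum>s\<in>UNIV. w$s * (V s - \<eta>))"
    by (simp add: sum_distrib_right right_diff_distrib sum_subtractf)
  also have "(\<Sum>s\<in>UNIV. w$s * (V s - \<eta>)) \<le> (\<Sum>s\<in>UNIV. P s / (1 - \<alpha>) * max (V s - \<eta>) 0)"
  proof (rule sum_mono)
    fix s
    have "w$s * (V s - \<eta>) \<le> w$s * max (V s - \<eta>) 0"
      by (intro mult_left_mono) (simp_all add: w_bounds)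
    also have "\<dots> \<le> P s / (1 - \<alpha>) * max (V s - \<eta>) 0"
      by (intro mult_right_mono) (simp_all add: w_bounds)
    finally show "w$s * (V s - \<eta>) \<le> P s / (1 - \<alpha>) * max (V s - \<eta>) 0" .
  qed
  finally show ?thesis
    using w by (simp add: cvar_envelope_def cvar_obj_def sum_distrib_left)
qed

lemma prob_in_cvar_envelope:
  assumes P: "\<And>s. 0 \<le> P s" "(\<Sum>s\<in>UNIV. P s) = 1" and \<alpha>: "0 \<le> \<alpha>" "\<alpha> < 1"
  shows "(\<chi> s. P s) \<in> cvar_envelope P \<alpha>"
proof -
  have "P s \<le> P s / (1 - \<alpha>)" for s
    using P(1)[of s] \<alpha> by (simp add: le_divide_eq mult_left_le)
  with P show ?thesis by (simp add: cvar_envelope_def)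
qed

lemma bdd_below_cvar_obj:
  assumes "\<And>s. 0 \<le> P s" "(\<Sum>s\<in>UNIV. P s) = 1" "0 \<le> \<alpha>" "\<alpha> < 1"
  shows "bdd_below (range (cvar_obj P \<alpha> V))"
  using envelope_le_cvar_obj[OF assms(1) prob_in_cvar_envelope[OF assms]] by (meson bdd_belowI2)

lemma envelope_le_cvar:
  assumes "\<And>s. 0 \<le> P s" and "w \<in> cvar_envelope P \<alpha>"
  shows "(\<Sum>s\<in>UNIV. w$s * V s) \<le> cvar P \<alpha> V"
  unfolding cvar_eq_Inf_cvar_obj by (rule cInf_greatest) (auto intro: envelope_le_cvar_obj[OF assms])

lemma cvar_le_cvar_obj:
  assumes "\<And>s. 0 \<le> P s" "(\<Sum>s\<in>UNIV. P s) = 1" "0 \<le> \<alpha>" "\<alpha> < 1"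
  shows "cvar P \<alpha> V \<le> cvar_obj P \<alpha> V \<eta>"
  unfolding cvar_eq_Inf_cvar_obj by (rule cInf_lower[OF _ bdd_below_cvar_obj[OF assms]]) simp

text \<open>\<open>cvar P \<alpha> V\<close> is the value of the linear program of minimising
  \<open>\<eta> + (\<Sum>s. P s * u s) / (1 - \<alpha>)\<close> subject to \<open>\<eta> + u s \<ge> V s\<close> and \<open>u s \<ge> 0\<close>; the LP multipliers of
  the constraints \<open>\<eta> + u s \<ge> V s\<close> form a point of the envelope.\<close>
lemma cvar_attained_in_envelope:
  fixes P :: "'a::finite \<Rightarrow> real"
  assumes P: "\<And>s. 0 \<le> P s" "(\<Sum>s\<in>UNIV. P s) = 1" and \<alpha>: "0 \<le> \<alpha>" "\<alpha> < 1"
  shows "\<exists>w\<in>cvar_envelope P \<alpha>. cvar P \<alpha> V \<le> (\<Sum>s\<in>UNIV. w$s * V s)"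
proof -
  define a :: "'a + 'a \<Rightarrow> real \<times> (real^'a)" where
    "a i = (case i of Inl s \<Rightarrow> (1, axis s 1) | Inr s \<Rightarrow> (0, axis s 1))" for i
  define b :: "'a + 'a \<Rightarrow> real" where "b i = (case i of Inl s \<Rightarrow> V s | Inr s \<Rightarrow> 0)" for i
  define g :: "real \<times> (real^'a)" where "g = (1, \<chi> s. P s / (1 - \<alpha>))"
  have "\<exists>y. (\<forall>i\<in>UNIV. 0 \<le> y i) \<and> (\<Sum>i\<in>UNIV. y i *\<^sub>R a i) = g \<and> cvar P \<alpha> V \<le> (\<Sum>i\<in>UNIV. y i * b i)"
  proof (rule farkas_bounded_below[where w = "(0, \<chi> s. max (V s) 0)"])
    show "\<forall>i\<in>UNIV. b i \<le> a i \<bullet> (0, \<chi> s. max (V s) 0)"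
      by (auto simp: a_def b_def inner_axis' split: sum.split)
  next
    fix v :: "real \<times> (real^'a)" assume H: "\<forall>i\<in>UNIV. b i \<le> a i \<bullet> v"
    obtain \<eta> u where v: "v = (\<eta>, u)" by (cases v)
    have "V s - \<eta> \<le> u$s" "0 \<le> u$s" for s
      using H[rule_format, of "Inl s"] H[rule_format, of "Inr s"]
      by (auto simp: a_def b_def v inner_axis')
    then have "(\<Sum>s\<in>UNIV. P s * max (V s - \<eta>) 0) \<le> (\<Sum>s\<in>UNIV. P s * u$s)"
      by (intro sum_mono mult_left_mono) (auto simp: P)
    then have "cvar_obj P \<alpha> V \<eta> \<le> \<eta> + (\<Sum>s\<in>UNIV. P s * u$s) / (1 - \<alpha>)"
      using \<alpha> by (simp add: cvar_obj_def divide_right_mono)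
    also have "\<dots> = g \<bullet> v"
      by (simp add: g_def v inner_vec_def sum_divide_distrib)
    finally show "cvar P \<alpha> V \<le> g \<bullet> v" using cvar_le_cvar_obj[OF P \<alpha>] order_trans by blast
  qed simp
  then obtain y where y: "\<forall>i. 0 \<le> y i" "(\<Sum>i\<in>UNIV. y i *\<^sub>R a i) = g"
     "cvar P \<alpha> V \<le> (\<Sum>i\<in>UNIV. y i * b i)" by auto
  have "(\<Sum>s\<in>UNIV. y (Inl s)) = 1"
    using arg_cong[OF y(2), of fst] by (simp add: sum_UNIV_Plus fst_sum a_def g_def)
  moreover have "y (Inl s) \<le> P s / (1 - \<alpha>)" for s
  proof -
    have "snd (\<Sum>i\<in>UNIV. y i *\<^sub>R a i) $ s = y (Inl s) + y (Inr s)"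
      by (simp add: sum_UNIV_Plus snd_sum a_def axis_def if_distrib cong: if_cong)
    with y(1) y(2) show ?thesis by (simp add: g_def add_increasing2)
  qed
  ultimately have "(\<chi> s. y (Inl s)) \<in> cvar_envelope P \<alpha>"
    using y(1) by (simp add: cvar_envelope_def)
  moreover have "(\<Sum>i\<in>UNIV. y i * b i) = (\<Sum>s\<in>UNIV. (\<chi> s. y (Inl s))$s * V s)"
    by (simp add: sum_UNIV_Plus b_def)
  ultimately show ?thesis using y(3) by metis
qed

lemma polytope_cvar_envelope: "polytope (cvar_envelope P \<alpha>)"
proof -
  have eq: "cvar_envelope P \<alpha> = (\<Inter>s. {w. (- axis s 1) \<bullet> w \<le> 0}) \<inter> (\<Inter>s. {w. axis s 1 \<bullet> w \<le> P s / (1 - \<alpha>)})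
        \<inter> {w. (\<chi> s. 1) \<bullet> w = 1}"
  proof -
    have "(\<chi> s. 1) \<bullet> w = (\<Sum>s\<in>UNIV. w$s)" for w :: "real^'a" by (simp add: inner_vec_def)
    then show ?thesis by (auto simp: cvar_envelope_def inner_axis')
  qed
  have "polyhedron (cvar_envelope P \<alpha>)" unfolding eq
    by (intro polyhedron_Int polyhedron_Inter)
      (auto simp: polyhedron_halfspace_le polyhedron_halfspace_ge polyhedron_hyperplane)
  moreover have "bounded (cvar_envelope P \<alpha>)"
    by (rule bounded_subset[OF bounded_cbox[of 0 "\<chi> s. P s / (1 - \<alpha>)"]])
       (auto simp: cvar_envelope_def mem_box_cart)
  ultimately show ?thesis by (simp add: polytope_eq_bounded_polyhedron)
qed

lemma vertex_le_cvar:
  assumes "\<And>s. 0 \<le> P s" and "convex hull E = cvar_envelope P \<alpha>" and "e \<in> E"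
  shows "(\<Sum>s\<in>UNIV. e$s * V s) \<le> cvar P \<alpha> V"
  using envelope_le_cvar[of P, OF assms(1)] hull_subset[of E convex] assms(2,3) by blast

lemma cvar_attained_at_vertex:
  fixes P :: "'a::finite \<Rightarrow> real"
  assumes "\<And>s. 0 \<le> P s" "(\<Sum>s\<in>UNIV. P s) = 1" "0 \<le> \<alpha>" "\<alpha> < 1"
    and E: "convex hull E = cvar_envelope P \<alpha>"
  shows "\<exists>e\<in>E. cvar P \<alpha> V \<le> (\<Sum>s\<in>UNIV. e$s * V s)"
proof -
  obtain w where w: "w \<in> cvar_envelope P \<alpha>" "cvar P \<alpha> V \<le> (\<Sum>s\<in>UNIV. w$s * V s)"
    using cvar_attained_in_envelope[OF assms(1-4)] by blast
  then obtain e where e: "e \<in> E" "(\<chi> s. V s) \<bullet> w \<le> (\<chi> s. V s) \<bullet> e"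
    using convex_hull_inner_le_generator E by blast
  then have "(\<Sum>s\<in>UNIV. w$s * V s) \<le> (\<Sum>s\<in>UNIV. e$s * V s)"
    by (simp add: inner_vec_def mult.commute)
  with w(2) e(1) show ?thesis by (meson order_trans)
qed

lemma downward_closed_eq_sublevel:
  fixes V :: "'a::finite \<Rightarrow> real"
  assumes "A \<noteq> {}" and down: "\<And>s s'. s \<in> A \<Longrightarrow> V s' \<le> V s \<Longrightarrow> s' \<in> A"
  shows "\<exists>s\<in>A. A = {s'. V s' \<le> V s}"
proof -
  have "Max (V ` A) \<in> V ` A" using assms(1) by (intro Max_in) auto
  then obtain s where s: "s \<in> A" "V s = Max (V ` A)" by auto
  have "A = {s'. V s' \<le> V s}"
  proof (intro set_eqI iffI)
    fix s' assume "s' \<in> A"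
    then show "s' \<in> {s'. V s' \<le> V s}" by (simp add: s(2))
  next
    fix s' assume "s' \<in> {s'. V s' \<le> V s}"
    then show "s' \<in> A" using down[OF s(1)] by simp
  qed
  with s(1) show ?thesis by blast
qed

lemma var_eq_quantile:
  fixes P :: "'a::finite \<Rightarrow> real"
  assumes P: "(\<Sum>s\<in>UNIV. P s) = 1" and \<alpha>: "0 < \<alpha>" "\<alpha> < 1"
  shows "\<exists>t. var P \<alpha> V = ereal t \<and> \<alpha> \<le> sum P {s. V s \<le> t} \<and> sum P {s. V s < t} \<le> \<alpha>"
proof -
  define S where "S = {t. \<alpha> \<le> sum P {s. V s \<le> t}}"
  have "Max (range V) \<in> range V \<inter> S"
    using P \<alpha> by (simp add: S_def)
  then have ne: "range V \<inter> S \<noteq> {}" by blast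
  define t where "t = Min (range V \<inter> S)"
  have t: "t \<in> S" using Min_in[OF _ ne] by (simp add: t_def)
  have least: "t \<le> t'" if "t' \<in> S" for t'
  proof -
    have "{s. V s \<le> t'} \<noteq> {}"
    proof
      assume "{s. V s \<le> t'} = {}"
      with that \<alpha> show False by (simp add: S_def)
    qed
    then obtain s where "V s \<le> t'" "{s'. V s' \<le> t'} = {s'. V s' \<le> V s}"
      using downward_closed_eq_sublevel[of "{s. V s \<le> t'}" V] by auto
    with that have "V s \<in> range V \<inter> S" by (simp add: S_def)
    then have "t \<le> V s" by (simp add: t_def)
    with \<open>V s \<le> t'\<close> show ?thesis by simp
  qed
  have "var P \<alpha> V = ereal t"
    unfolding var_def
  proof (rule Inf_eqI)
    fix i assume "i \<in> {ereal t' |t'. \<alpha> \<le> sum P {s. V s \<le> t'}}"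
    then show "ereal t \<le> i" using least by (auto simp: S_def)
  next
    fix y assume "\<And>i. i \<in> {ereal t' |t'. \<alpha> \<le> sum P {s. V s \<le> t'}} \<Longrightarrow> y \<le> i"
    then show "y \<le> ereal t" using t by (auto simp: S_def)
  qed
  moreover have "sum P {s. V s < t} \<le> \<alpha>"
  proof (cases "{s. V s < t} = {}")
    case False
    then obtain s where s: "V s < t" "{s'. V s' < t} = {s'. V s' \<le> V s}"
      using downward_closed_eq_sublevel[of "{s. V s < t}" V] by auto
    then have "V s \<notin> S" using least by (meson not_le)
    with s show ?thesis by (simp add: S_def)
  qed (use \<alpha> in simp)
  ultimately show ?thesis using t by (auto simp: S_def)
qed

lemma var_at_zero:
  assumes "\<And>s. 0 \<le> P s"
  shows "var P 0 V = -\<infinity>"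
proof -
  have "var P 0 V \<le> ereal B" for B
    unfolding var_def by (rule Inf_lower) (auto intro!: sum_nonneg assms)
  then show ?thesis by (rule ereal_bot)
qed

lemma excess_ge_right:
  fixes P :: "'a::finite \<Rightarrow> real"
  assumes P: "\<And>s. 0 \<le> P s" and "t \<le> \<eta>"
  shows "(\<Sum>s\<in>UNIV. P s * max (V s - t) 0) - (\<eta> - t) * sum P {s. t < V s}
     \<le> (\<Sum>s\<in>UNIV. P s * max (V s - \<eta>) 0)"
proof -
  have "P s * max (V s - t) 0 - P s * (if t < V s then \<eta> - t else 0) \<le> P s * max (V s - \<eta>) 0" for s
  proof -
    have "max (V s - t) 0 - (if t < V s then \<eta> - t else 0) \<le> max (V s - \<eta>) 0"
      using assms(2) by auto
    with P[of s] show ?thesis by (metis mult_left_mono right_diff_distrib)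
  qed
  then show ?thesis by (simp add: sum_mult_indicator[symmetric] sum_subtractf[symmetric] sum_mono)
qed

lemma excess_ge_left:
  fixes P :: "'a::finite \<Rightarrow> real"
  assumes P: "\<And>s. 0 \<le> P s" and "\<eta> \<le> t"
  shows "(\<Sum>s\<in>UNIV. P s * max (V s - t) 0) + (t - \<eta>) * sum P {s. t \<le> V s}
     \<le> (\<Sum>s\<in>UNIV. P s * max (V s - \<eta>) 0)"
proof -
  have "P s * max (V s - t) 0 + P s * (if t \<le> V s then t - \<eta> else 0) \<le> P s * max (V s - \<eta>) 0" for s
  proof -
    have "max (V s - t) 0 + (if t \<le> V s then t - \<eta> else 0) \<le> max (V s - \<eta>) 0"
      using assms(2) by auto
    with P[of s] show ?thesis by (metis mult_left_mono distrib_left)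
  qed
  then show ?thesis by (simp add: sum_mult_indicator[symmetric] sum.distrib[symmetric] sum_mono)
qed

text \<open>The Rockafellar--Uryasev objective is minimised at any \<open>\<alpha>\<close>-quantile \<open>t\<close>: to the right of \<open>t\<close>
  the expected excess decreases at rate at most \<open>P {V > t} \<le> 1 - \<alpha>\<close>, to the left of \<open>t\<close> it
  increases at rate at least \<open>P {V \<ge> t} \<ge> 1 - \<alpha>\<close>.\<close>
lemma cvar_obj_minimal_at_quantile:
  fixes P :: "'a::finite \<Rightarrow> real"
  assumes P: "\<And>s. 0 \<le> P s" "(\<Sum>s\<in>UNIV. P s) = 1" and \<alpha>: "\<alpha> < 1"
    and t: "\<alpha> \<le> sum P {s. V s \<le> t}" "sum P {s. V s < t} \<le> \<alpha>"
  shows "cvar_obj P \<alpha> V t \<le> cvar_obj P \<alpha> V \<eta>"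
proof -
  define K where "K = 1 / (1 - \<alpha>)"
  define X where "X e = (\<Sum>s\<in>UNIV. P s * max (V s - e) 0)" for e
  have K: "0 < K" using \<alpha> by (simp add: K_def)
  have obj: "cvar_obj P \<alpha> V e = e + K * X e" for e by (simp add: cvar_obj_def K_def X_def)
  show ?thesis
  proof (cases "t \<le> \<eta>")
    case True
    define Q where "Q = sum P {s. t < V s}"
    have "K * Q \<le> 1"
      using t(1) P(2) \<alpha> sum_Collect_not[of P "\<lambda>s. V s \<le> t"]
      by (simp add: K_def Q_def not_le divide_le_eq)
    then have "(\<eta> - t) * (K * Q) \<le> \<eta> - t" using True by (simp add: mult_left_le)
    moreover have "X t - (\<eta> - t) * Q \<le> X \<eta>"
      unfolding X_def Q_def by (rule excess_ge_right[OF P(1) True])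
    then have "K * (X t - (\<eta> - t) * Q) \<le> K * X \<eta>" using K by simp
    ultimately show ?thesis unfolding obj by (simp add: algebra_simps)
  next
    case False
    define Q where "Q = sum P {s. t \<le> V s}"
    have "1 \<le> K * Q"
      using t(2) P(2) \<alpha> sum_Collect_not[of P "\<lambda>s. V s < t"]
      by (simp add: K_def Q_def not_less le_divide_eq)
    then have "t - \<eta> \<le> (t - \<eta>) * (K * Q)" using False by (simp add: mult_le_cancel_left1)
    moreover have "X t + (t - \<eta>) * Q \<le> X \<eta>"
      unfolding X_def Q_def by (rule excess_ge_left) (use P(1) False in auto)
    then have "K * (X t + (t - \<eta>) * Q) \<le> K * X \<eta>" using K by simp
    ultimately show ?thesis unfolding obj by (simp add: algebra_simps)
  qed
qed

lemma cvar_eq_cvar_obj_at_quantile: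
  fixes P :: "'a::finite \<Rightarrow> real"
  assumes "\<And>s. 0 \<le> P s" "(\<Sum>s\<in>UNIV. P s) = 1" "\<alpha> < 1"
    and "\<alpha> \<le> sum P {s. V s \<le> t}" "sum P {s. V s < t} \<le> \<alpha>"
  shows "cvar P \<alpha> V = cvar_obj P \<alpha> V t"
  unfolding cvar_eq_Inf_cvar_obj
  by (rule cInf_eq_minimum) (use cvar_obj_minimal_at_quantile[OF assms] in auto)

lemma envelope_slack:
  fixes w k v t :: real
  assumes "0 \<le> w" "w \<le> k"
  shows "0 \<le> k * max (v - t) 0 - w * (v - t)"
    and "k * max (v - t) 0 - w * (v - t) = 0 \<longleftrightarrow> (0 < w \<longrightarrow> t \<le> v) \<and> (0 < k - w \<longrightarrow> v \<le> t)"
proof -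
  have eq: "k * max (v - t) 0 - w * (v - t) = (if t < v then (k - w) * (v - t) else w * (t - v))"
    by (simp add: algebra_simps)
  show "0 \<le> k * max (v - t) 0 - w * (v - t)" using assms unfolding eq by simp
  show "k * max (v - t) 0 - w * (v - t) = 0 \<longleftrightarrow> (0 < w \<longrightarrow> t \<le> v) \<and> (0 < k - w \<longrightarrow> v \<le> t)"
    using assms unfolding eq by auto
qed

lemma cvar_envelope_at_zero:
  assumes "(\<Sum>s\<in>UNIV. P s) = 1" and "w \<in> cvar_envelope P 0"
  shows "w = (\<chi> s. P s)"
proof -
  have "(\<Sum>s\<in>UNIV. P s - w$s) = 0" "\<forall>s\<in>UNIV. 0 \<le> P s - w$s"
    using assms by (auto simp: cvar_envelope_def sum_subtractf)
  then show ?thesis by (simp add: sum_nonneg_eq_0_iff vec_eq_iff)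
qed

lemma envelope_attains_cvar_iff:
  fixes P :: "'a::finite \<Rightarrow> real"
  assumes P: "\<And>s. 0 \<le> P s" "(\<Sum>s\<in>UNIV. P s) = 1" and \<alpha>: "0 \<le> \<alpha>" "\<alpha> < 1"
    and w: "w \<in> cvar_envelope P \<alpha>"
  shows "(\<Sum>s\<in>UNIV. w$s * V s) = cvar P \<alpha> V \<longleftrightarrow>
     (\<forall>s. 0 < w$s \<longrightarrow> var P \<alpha> V \<le> ereal (V s)) \<and>
     (\<forall>s. 0 < P s / (1 - \<alpha>) - w$s \<longrightarrow> ereal (V s) \<le> var P \<alpha> V)"
proof (cases "\<alpha> = 0")
  case True
  then have w: "w = (\<chi> s. P s)" using cvar_envelope_at_zero[OF P(2)] w by blast
  obtain w' where w': "w' \<in> cvar_envelope P \<alpha>" "cvar P \<alpha> V \<le> (\<Sum>s\<in>UNIV. w'$s * V s)"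
    using cvar_attained_in_envelope[OF P \<alpha>] by blast
  have "w' = w" using w w'(1) cvar_envelope_at_zero[OF P(2)] True by blast
  with w' have "(\<Sum>s\<in>UNIV. w$s * V s) = cvar P \<alpha> V"
    using envelope_le_cvar[of P, OF P(1) assms(5), of V] by simp
  then show ?thesis using True w var_at_zero[of P V, OF P(1)] by simp
next
  case False
  with \<alpha> have "0 < \<alpha>" by simp
  then obtain t where t: "var P \<alpha> V = ereal t" "\<alpha> \<le> sum P {s. V s \<le> t}" "sum P {s. V s < t} \<le> \<alpha>"
    using var_eq_quantile[OF P(2) _ \<alpha>(2)] by blast
  have w_bounds: "0 \<le> w$s" "w$s \<le> P s / (1 - \<alpha>)" for s
    using w by (auto simp: cvar_envelope_def)
  define d where "d s = P s / (1 - \<alpha>) * max (V s - t) 0 - w$s * (V s - t)" for s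
  have slack: "0 \<le> d s" "d s = 0 \<longleftrightarrow> (0 < w$s \<longrightarrow> t \<le> V s) \<and> (0 < P s / (1 - \<alpha>) - w$s \<longrightarrow> V s \<le> t)"
    for s unfolding d_def using envelope_slack[OF w_bounds] by blast+
  have "cvar P \<alpha> V - (\<Sum>s\<in>UNIV. w$s * V s) = (\<Sum>s\<in>UNIV. d s)"
  proof -
    have "(\<Sum>s\<in>UNIV. w$s * V s) = (\<Sum>s\<in>UNIV. w$s) * t + (\<Sum>s\<in>UNIV. w$s * (V s - t))"
      by (simp add: sum_distrib_right right_diff_distrib sum_subtractf)
    also have "(\<Sum>s\<in>UNIV. w$s) = 1" using w by (simp add: cvar_envelope_def)
    finally have "(\<Sum>s\<in>UNIV. w$s * V s) = t + (\<Sum>s\<in>UNIV. w$s * (V s - t))" by simp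
    moreover have "cvar P \<alpha> V = t + (\<Sum>s\<in>UNIV. P s / (1 - \<alpha>) * max (V s - t) 0)"
      using cvar_eq_cvar_obj_at_quantile[OF P \<alpha>(2) t(2,3)] by (simp add: cvar_obj_def sum_distrib_left)
    ultimately show ?thesis by (simp add: d_def sum_subtractf)
  qed
  then have "(\<Sum>s\<in>UNIV. w$s * V s) = cvar P \<alpha> V \<longleftrightarrow> (\<forall>s. d s = 0)"
    using sum_nonneg_eq_0_iff[of UNIV d] slack(1) by auto
  then show ?thesis unfolding slack(2) t(1) by auto
qed

section \<open>Weak duality and complementary slackness\<close>

locale cvar_lp =
  fixes p :: "'s::finite \<Rightarrow> real" and \<alpha> :: real
    and qZ :: "'k::finite \<Rightarrow> real" and z :: "'k \<Rightarrow> real^'d::finite"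
    and C :: "(real^'d) set"
    and A :: "real^'n1::finite^'m1::finite" and b :: "real^'m1" and f :: "real^'n1"
    and q :: "'s \<Rightarrow> real^'n2::finite" and T :: "'s \<Rightarrow> real^'n1^'m2::finite"
    and W :: "'s \<Rightarrow> real^'n2^'m2" and h :: "'s \<Rightarrow> real^'m2"
    and gbar :: "'s \<Rightarrow> real^'n1^'d" and gtil :: "'s \<Rightarrow> real^'n2^'d"
  assumes p_pos: "\<And>s. 0 < p s" and p_sum: "(\<Sum>s\<in>UNIV. p s) = 1"
    and alpha: "0 \<le> \<alpha>" "\<alpha> < 1"
begin

abbreviation "FP \<equiv> feasP p \<alpha> C qZ z A b T W h gbar gtil"
abbreviation "FD \<equiv> feasD p \<alpha> C A f q T W gbar gtil"
abbreviation "oP \<equiv> objP p f q"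
abbreviation "oD \<equiv> objD p \<alpha> qZ z b h"
abbreviation "G x y s \<equiv> ghat gbar gtil x y s"
abbreviation "loss_cvar x y c \<equiv> cvar p \<alpha> (\<lambda>s. c \<bullet> G x y s)"
abbreviation "loss_var x y c \<equiv> var p \<alpha> (\<lambda>s. c \<bullet> G x y s)"
abbreviation "bench_cvar c \<equiv> cvar qZ \<alpha> (\<lambda>k. c \<bullet> z k)"

lemma p_nonneg: "0 \<le> p s"
  using p_pos[of s] by simp

lemma weighted_sum_eq_0_iff:
  assumes "\<And>s. 0 \<le> a s"
  shows "(\<Sum>s\<in>UNIV. p s * a s) = 0 \<longleftrightarrow> (\<forall>s. a s = 0)"
  using assms p_pos by (simp add: sum_nonneg_eq_0_iff p_nonneg less_imp_neq[symmetric])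

text \<open>Reduced costs of the first- and second-stage variables, with the cost vectors \<open>f'\<close> and
  \<open>q'\<close> kept as parameters: for \<open>f' = f\<close>, \<open>q' = q s\<close> they are the slacks of the dual constraints,
  for \<open>f' = 0\<close>, \<open>q' = 0\<close> they describe a recession direction of the dual.\<close>
definition reduced_cost_x ::
    "real^'n1 \<Rightarrow> real^'m1 \<Rightarrow> ('s \<Rightarrow> real^'d \<Rightarrow> real) \<Rightarrow> ('s \<Rightarrow> real^'m2) \<Rightarrow> real^'n1" where
  "reduced_cost_x f' lam nu piv = f' + lam v* A - (\<Sum>s\<in>UNIV. p s *\<^sub>R (piv s v* T s))
     + (\<Sum>s\<in>UNIV. p s *\<^sub>R fint (nu s) (\<lambda>c. c v* gbar s))"

definition reduced_cost_y ::
    "real^'n2 \<Rightarrow> ('s \<Rightarrow> real^'d \<Rightarrow> real) \<Rightarrow> ('s \<Rightarrow> real^'m2) \<Rightarrow> 's \<Rightarrow> real^'n2" where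
  "reduced_cost_y q' nu piv s = q' - piv s v* W s + fint (nu s) (\<lambda>c. c v* gtil s)"

lemma mem_feasD_iff:
  "(lam, mu, nu, piv) \<in> feasD p \<alpha> C A f' q' T W gbar gtil \<longleftrightarrow>
     (\<forall>i. 0 \<le> lam $ i) \<and> fin_meas C mu \<and> (\<forall>s. fin_meas C (nu s)) \<and> (\<forall>s i. 0 \<le> piv s $ i)
     \<and> (\<forall>c. (\<Sum>s\<in>UNIV. p s * nu s c) = mu c) \<and> (\<forall>s c. nu s c \<le> mu c / (1 - \<alpha>))
     \<and> (\<forall>j. 0 \<le> reduced_cost_x f' lam nu piv $ j) \<and> (\<forall>s j. 0 \<le> reduced_cost_y (q' s) nu piv s $ j)"
proof -
  have "(\<forall>B\<subseteq>C. (\<Sum>s\<in>UNIV. p s * msr (nu s) B) = msr mu B) \<and> (\<forall>s. \<forall>B\<subseteq>C. msr (nu s) B \<le> msr mu B / (1 - \<alpha>))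
     \<longleftrightarrow> (\<forall>c. (\<Sum>s\<in>UNIV. p s * nu s c) = mu c) \<and> (\<forall>s c. nu s c \<le> mu c / (1 - \<alpha>))"
    if "fin_meas C mu" "\<forall>s. fin_meas C (nu s)"
    using that by (simp add: mixture_msr_iff msr_le_iff)
  moreover have "(((\<Sum>s\<in>UNIV. p s *\<^sub>R (piv s v* T s))
        - (\<Sum>s\<in>UNIV. p s *\<^sub>R fint (nu s) (\<lambda>c. c v* gbar s))) $ j \<le> (f' + lam v* A) $ j)
      \<longleftrightarrow> 0 \<le> reduced_cost_x f' lam nu piv $ j" for j
    by (auto simp: reduced_cost_x_def)
  moreover have "(piv s v* W s - fint (nu s) (\<lambda>c. c v* gtil s)) $ j \<le> q' s $ j
      \<longleftrightarrow> 0 \<le> reduced_cost_y (q' s) nu piv s $ j" for s j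
    by (auto simp: reduced_cost_y_def)
  ultimately show ?thesis unfolding feasD_def by auto
qed

lemma fsupp_scenario_subset:
  assumes "(lam, mu, nu, piv) \<in> FD"
  shows "fsupp (nu s) \<subseteq> fsupp mu"
proof
  fix c assume "c \<in> fsupp (nu s)"
  have nu: "0 \<le> nu s' c" for s' using assms by (simp add: mem_feasD_iff fin_meas_def)
  with \<open>c \<in> fsupp (nu s)\<close> have "0 < nu s c" by (simp add: fsupp_def less_le)
  then have "0 < p s * nu s c" using p_pos[of s] by simp
  also have "\<dots> \<le> (\<Sum>s\<in>UNIV. p s * nu s c)"
    by (rule member_le_sum) (simp_all add: nu p_nonneg)
  finally show "c \<in> fsupp mu" using assms by (simp add: mem_feasD_iff fsupp_def)
qed

lemma scenario_density_in_envelope: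
  assumes "(lam, mu, nu, piv) \<in> FD" and "0 < mu c"
  shows "(\<chi> s. p s * nu s c / mu c) \<in> cvar_envelope p \<alpha>"
proof -
  have D: "\<And>s. 0 \<le> nu s c" "(\<Sum>s\<in>UNIV. p s * nu s c) = mu c" "\<And>s. nu s c \<le> mu c / (1 - \<alpha>)"
    using assms(1) by (auto simp: mem_feasD_iff fin_meas_def)
  have "p s * nu s c / mu c \<le> p s / (1 - \<alpha>)" for s
  proof -
    have "p s * nu s c \<le> p s * (mu c / (1 - \<alpha>))" using D(3) p_nonneg by (rule mult_left_mono)
    with assms(2) show ?thesis by (simp add: divide_le_eq field_simps)
  qed
  with D assms(2) show ?thesis
    by (simp add: cvar_envelope_def p_nonneg sum_divide_distrib[symmetric])
qed

lemma duality_gap_eq: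
  assumes fin: "finite (fsupp mu)" and sub: "\<And>s. fsupp (nu s) \<subseteq> fsupp mu"
  shows "oP (x, y) - oD (lam, mu, nu, piv) =
     (\<Sum>c\<in>fsupp mu. mu c * bench_cvar c - (\<Sum>s\<in>UNIV. p s * nu s c * (c \<bullet> G x y s)))
   + lam \<bullet> (b - A *v x)
   + (\<Sum>s\<in>UNIV. p s * (piv s \<bullet> (T s *v x + W s *v y s - h s)))
   + reduced_cost_x f lam nu piv \<bullet> x
   + (\<Sum>s\<in>UNIV. p s * (reduced_cost_y (q s) nu piv s \<bullet> y s))"
proof -
  define F where "F = fsupp mu"
  define Gb where "Gb s = fint (nu s) (\<lambda>c. c v* gbar s)" for s
  define Gt where "Gt s = fint (nu s) (\<lambda>c. c v* gtil s)" for s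
  have gb: "Gb s \<bullet> x = (\<Sum>c\<in>F. nu s c * (c \<bullet> (gbar s *v x)))" for s
    unfolding Gb_def F_def using fin sub[of s]
    by (simp add: fint_eq_sum_superset inner_sum_left dot_lmul_matrix)
  have gt: "Gt s \<bullet> y s = (\<Sum>c\<in>F. nu s c * (c \<bullet> (gtil s *v y s)))" for s
    unfolding Gt_def F_def using fin sub[of s]
    by (simp add: fint_eq_sum_superset inner_sum_left dot_lmul_matrix)
  have "(\<Sum>c\<in>F. \<Sum>s\<in>UNIV. p s * nu s c * (c \<bullet> G x y s))
      = (\<Sum>s\<in>UNIV. p s * (Gb s \<bullet> x)) + (\<Sum>s\<in>UNIV. p s * (Gt s \<bullet> y s))"
    unfolding gb gt ghat_def
    by (subst sum.swap) (simp add: inner_add_right sum_distrib_left sum.distrib algebra_simps)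
  moreover have "fint mu (\<lambda>c. bench_cvar c) = (\<Sum>c\<in>F. mu c * bench_cvar c)"
    by (simp add: fint_def F_def)
  ultimately show ?thesis
    unfolding F_def[symmetric] reduced_cost_x_def reduced_cost_y_def Gb_def[symmetric] Gt_def[symmetric]
    by (simp add: objP_def objD_def sum_subtractf inner_add_left inner_diff_left inner_add_right
        inner_diff_right inner_sum_left dot_lmul_matrix sum.distrib algebra_simps)
qed

lemma cvar_gap_term:
  assumes xy: "(x, y) \<in> FP" and D: "(lam, mu, nu, piv) \<in> FD" and c: "0 < mu c"
  defines "t \<equiv> mu c * bench_cvar c - (\<Sum>s\<in>UNIV. p s * nu s c * (c \<bullet> G x y s))"
  shows "0 \<le> t"
    and "t = 0 \<longleftrightarrow> loss_cvar x y c = bench_cvar c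
           \<and> (\<forall>s. 0 < nu s c \<longrightarrow> loss_var x y c \<le> ereal (c \<bullet> G x y s))
           \<and> (\<forall>s. 0 < mu c / (1 - \<alpha>) - nu s c \<longrightarrow> ereal (c \<bullet> G x y s) \<le> loss_var x y c)"
proof -
  define w where "w = (\<chi> s. p s * nu s c / mu c)"
  have w: "w \<in> cvar_envelope p \<alpha>" unfolding w_def by (rule scenario_density_in_envelope[OF D c])
  have "c \<in> C" using D c by (auto simp: mem_feasD_iff fin_meas_def fsupp_def)
  then have feasible: "0 \<le> bench_cvar c - loss_cvar x y c" using xy by (simp add: feasP_def)
  have envelope: "0 \<le> loss_cvar x y c - (\<Sum>s\<in>UNIV. w$s * (c \<bullet> G x y s))"
    using envelope_le_cvar[of p, OF p_nonneg w] by simp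
  have t: "t = mu c * (bench_cvar c - loss_cvar x y c)
      + mu c * (loss_cvar x y c - (\<Sum>s\<in>UNIV. w$s * (c \<bullet> G x y s)))"
    using c by (simp add: t_def w_def sum_distrib_left algebra_simps)
  show "0 \<le> t" unfolding t using c feasible envelope by simp
  have "t = 0 \<longleftrightarrow> loss_cvar x y c = bench_cvar c \<and> (\<Sum>s\<in>UNIV. w$s * (c \<bullet> G x y s)) = loss_cvar x y c"
    unfolding t using c feasible envelope by (auto simp: add_nonneg_eq_0_iff)
  moreover have "0 < w$s \<longleftrightarrow> 0 < nu s c" for s
    using c p_pos[of s] by (simp add: w_def zero_less_mult_iff zero_less_divide_iff)
  moreover have "0 < p s / (1 - \<alpha>) - w$s \<longleftrightarrow> 0 < mu c / (1 - \<alpha>) - nu s c" for s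
  proof -
    have "p s / (1 - \<alpha>) - w$s = (p s / mu c) * (mu c / (1 - \<alpha>) - nu s c)"
      using c by (simp add: w_def field_simps)
    moreover have "0 < p s / mu c" using c p_pos[of s] by simp
    ultimately show ?thesis by (metis zero_less_mult_pos mult_pos_pos diff_gt_0_iff_gt)
  qed
  ultimately show "t = 0 \<longleftrightarrow> loss_cvar x y c = bench_cvar c
           \<and> (\<forall>s. 0 < nu s c \<longrightarrow> loss_var x y c \<le> ereal (c \<bullet> G x y s))
           \<and> (\<forall>s. 0 < mu c / (1 - \<alpha>) - nu s c \<longrightarrow> ereal (c \<bullet> G x y s) \<le> loss_var x y c)"
    using envelope_attains_cvar_iff[OF p_nonneg p_sum alpha w] by simp
qed

lemma pointwise_iff_support_conditions:
  assumes D: "(lam, mu, nu, piv) \<in> FD"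
  shows "(\<forall>c\<in>fsupp mu. Q c \<and> (\<forall>s. 0 < nu s c \<longrightarrow> R s c) \<and> (\<forall>s. 0 < mu c / (1 - \<alpha>) - nu s c \<longrightarrow> S s c))
     \<longleftrightarrow> support C mu \<subseteq> {c. Q c} \<and> (\<forall>s. support C (nu s) \<subseteq> {c. R s c})
       \<and> (\<forall>s. support C (\<lambda>c. mu c / (1 - \<alpha>) - nu s c) \<subseteq> {c. S s c})"
proof -
  have mu: "fsupp mu \<subseteq> C" "\<And>c. 0 \<le> mu c" and nu: "\<And>s c. 0 \<le> nu s c"
    using D by (auto simp: mem_feasD_iff fin_meas_def)
  have "support C mu = fsupp mu" using mu by (auto simp: support_def fsupp_def less_le)
  moreover have "c \<in> fsupp mu" if "0 < nu s c" for s c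
  proof -
    have "c \<in> fsupp (nu s)" using that by (simp add: fsupp_def)
    then show ?thesis using fsupp_scenario_subset[OF D] by blast
  qed
  moreover have "c \<in> fsupp mu" if "0 < mu c / (1 - \<alpha>) - nu s c" for s c
    using that nu[of s c] by (auto simp: fsupp_def)
  ultimately show ?thesis using mu(1) unfolding support_def by blast
qed

lemma cvar_gap:
  assumes xy: "(x, y) \<in> FP" and D: "(lam, mu, nu, piv) \<in> FD"
  defines "gap \<equiv> (\<Sum>c\<in>fsupp mu. mu c * bench_cvar c - (\<Sum>s\<in>UNIV. p s * nu s c * (c \<bullet> G x y s)))"
  shows "0 \<le> gap"
    and "gap = 0 \<longleftrightarrow> support C mu \<subseteq> {c. loss_cvar x y c = bench_cvar c}
           \<and> (\<forall>s. support C (nu s) \<subseteq> {c. loss_var x y c \<le> ereal (c \<bullet> G x y s)})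
           \<and> (\<forall>s. support C (\<lambda>c. mu c / (1 - \<alpha>) - nu s c) \<subseteq> {c. ereal (c \<bullet> G x y s) \<le> loss_var x y c})"
proof -
  have fin: "finite (fsupp mu)" using D by (simp add: mem_feasD_iff fin_meas_def)
  have pos: "0 < mu c" if "c \<in> fsupp mu" for c
    using that D by (auto simp: mem_feasD_iff fin_meas_def fsupp_def less_le)
  note gap_term = cvar_gap_term[OF xy D pos]
  show "0 \<le> gap" unfolding gap_def by (rule sum_nonneg) (rule gap_term(1))
  have "gap = 0 \<longleftrightarrow> (\<forall>c\<in>fsupp mu. mu c * bench_cvar c - (\<Sum>s\<in>UNIV. p s * nu s c * (c \<bullet> G x y s)) = 0)"
    unfolding gap_def using fin by (rule sum_nonneg_eq_0_iff) (rule gap_term(1))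
  with gap_term(2) pointwise_iff_support_conditions[OF D]
  show "gap = 0 \<longleftrightarrow> support C mu \<subseteq> {c. loss_cvar x y c = bench_cvar c}
           \<and> (\<forall>s. support C (nu s) \<subseteq> {c. loss_var x y c \<le> ereal (c \<bullet> G x y s)})
           \<and> (\<forall>s. support C (\<lambda>c. mu c / (1 - \<alpha>) - nu s c) \<subseteq> {c. ereal (c \<bullet> G x y s) \<le> loss_var x y c})"
    by simp
qed

theorem complementary_slackness:
  assumes xy: "(x, y) \<in> FP" and D: "(lam, mu, nu, piv) \<in> FD"
  shows "oD (lam, mu, nu, piv) \<le> oP (x, y)"
    and "oP (x, y) = oD (lam, mu, nu, piv) \<longleftrightarrow>
           support C mu \<subseteq> {c. loss_cvar x y c = bench_cvar c}
           \<and> (\<forall>s. support C (nu s) \<subseteq> {c. loss_var x y c \<le> ereal (c \<bullet> G x y s)})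
           \<and> (\<forall>s. support C (\<lambda>c. mu c / (1 - \<alpha>) - nu s c) \<subseteq> {c. ereal (c \<bullet> G x y s) \<le> loss_var x y c})
           \<and> lam \<bullet> (b - A *v x) = 0
           \<and> (\<forall>s. piv s \<bullet> (T s *v x + W s *v y s - h s) = 0)
           \<and> reduced_cost_x f lam nu piv \<bullet> x = 0
           \<and> (\<forall>s. reduced_cost_y (q s) nu piv s \<bullet> y s = 0)" (is "_ \<longleftrightarrow> ?slack")
proof -
  have P: "\<And>i. (A *v x) $ i \<le> b $ i" "\<And>j. 0 \<le> x $ j" "\<And>s j. 0 \<le> y s $ j"
    "\<And>s i. h s $ i \<le> (T s *v x + W s *v y s) $ i"
    using xy by (auto simp: feasP_def)
  have DF: "\<And>i. 0 \<le> lam $ i" "\<And>s i. 0 \<le> piv s $ i" "finite (fsupp mu)"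
    "\<And>j. 0 \<le> reduced_cost_x f lam nu piv $ j" "\<And>s j. 0 \<le> reduced_cost_y (q s) nu piv s $ j"
    using D by (auto simp: mem_feasD_iff fin_meas_def)
  have nonneg_A: "0 \<le> lam \<bullet> (b - A *v x)"
    and nonneg_T: "0 \<le> piv s \<bullet> (T s *v x + W s *v y s - h s)"
    and nonneg_x: "0 \<le> reduced_cost_x f lam nu piv \<bullet> x"
    and nonneg_y: "0 \<le> reduced_cost_y (q s) nu piv s \<bullet> y s" for s
    by (rule inner_nonneg_if_components_nonneg; use DF P in simp)+
  have nonneg_T_sum: "0 \<le> (\<Sum>s\<in>UNIV. p s * (piv s \<bullet> (T s *v x + W s *v y s - h s)))"
    and nonneg_y_sum: "0 \<le> (\<Sum>s\<in>UNIV. p s * (reduced_cost_y (q s) nu piv s \<bullet> y s))"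
    using nonneg_T nonneg_y by (auto intro!: sum_nonneg simp: p_nonneg)
  have "\<And>s. fsupp (nu s) \<subseteq> fsupp mu" by (rule fsupp_scenario_subset[OF D])
  note gap = duality_gap_eq[where x = x and y = y and lam = lam and mu = mu and nu = nu and piv = piv,
      OF DF(3) this]
  show "oD (lam, mu, nu, piv) \<le> oP (x, y)"
    using gap cvar_gap(1)[OF xy D] nonneg_A nonneg_T_sum nonneg_x nonneg_y_sum by linarith
  let ?g = "\<Sum>c\<in>fsupp mu. mu c * bench_cvar c - (\<Sum>s\<in>UNIV. p s * nu s c * (c \<bullet> G x y s))"
  have "oP (x, y) = oD (lam, mu, nu, piv) \<longleftrightarrow> ?g = 0 \<and> lam \<bullet> (b - A *v x) = 0
      \<and> (\<Sum>s\<in>UNIV. p s * (piv s \<bullet> (T s *v x + W s *v y s - h s))) = 0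
      \<and> reduced_cost_x f lam nu piv \<bullet> x = 0
      \<and> (\<Sum>s\<in>UNIV. p s * (reduced_cost_y (q s) nu piv s \<bullet> y s)) = 0"
    using gap cvar_gap(1)[OF xy D] nonneg_A nonneg_T_sum nonneg_x nonneg_y_sum by linarith
  then show "oP (x, y) = oD (lam, mu, nu, piv) \<longleftrightarrow> ?slack"
    using cvar_gap(2)[OF xy D] by (simp add: weighted_sum_eq_0_iff nonneg_T nonneg_y)
qed

corollary weak_duality:
  assumes "xy \<in> FP" and "D \<in> FD"
  shows "oD D \<le> oP xy"
proof -
  obtain x y where "xy = (x, y)" by (cases xy)
  moreover obtain lam mu nu piv where "D = (lam, mu, nu, piv)" by (cases D) auto
  ultimately show ?thesis using complementary_slackness(1) assms by blast
qed

end

section \<open>A finite linear program equivalent to (LinearP)\<close>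

locale cvar_lp_polyhedral = cvar_lp p \<alpha> qZ z C A b f q T W h gbar gtil
  for p :: "'s::finite \<Rightarrow> real" and \<alpha> :: real
    and qZ :: "'k::finite \<Rightarrow> real" and z :: "'k \<Rightarrow> real^'d::finite"
    and C :: "(real^'d) set"
    and A :: "real^'n1::finite^'m1::finite" and b :: "real^'m1" and f :: "real^'n1"
    and q :: "'s \<Rightarrow> real^'n2::finite" and T :: "'s \<Rightarrow> real^'n1^'m2::finite"
    and W :: "'s \<Rightarrow> real^'n2^'m2" and h :: "'s \<Rightarrow> real^'m2"
    and gbar :: "'s \<Rightarrow> real^'n1^'d" and gtil :: "'s \<Rightarrow> real^'n2^'d" +
  assumes qZ_nonneg: "\<And>k. 0 \<le> qZ k" and qZ_sum: "(\<Sum>k\<in>UNIV. qZ k) = 1"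
    and C_poly: "polyhedron C" and C_simplex: "C \<subseteq> unit_simplex"
begin

definition "loss_vertices = (SOME E. finite E \<and> convex hull E = cvar_envelope p \<alpha>)"

definition "bench_vertices = (SOME E. finite E \<and> convex hull E = cvar_envelope qZ \<alpha>)"

lemma loss_vertices: "finite loss_vertices" "convex hull loss_vertices = cvar_envelope p \<alpha>"
  using someI_ex[OF polytope_vertices_exist[OF polytope_cvar_envelope]]
  unfolding loss_vertices_def by auto

lemma bench_vertices: "finite bench_vertices" "convex hull bench_vertices = cvar_envelope qZ \<alpha>"
  using someI_ex[OF polytope_vertices_exist[OF polytope_cvar_envelope]]
  unfolding bench_vertices_def by auto

lemma bench_vertices_nonempty: "bench_vertices \<noteq> {}"
  using prob_in_cvar_envelope[OF qZ_nonneg qZ_sum alpha] bench_vertices(2) by auto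

lemma loss_vertex_le_cvar: "e \<in> loss_vertices \<Longrightarrow> (\<Sum>s\<in>UNIV. e$s * (c \<bullet> G x y s)) \<le> loss_cvar x y c"
  by (rule vertex_le_cvar[OF p_nonneg loss_vertices(2)])

lemma loss_cvar_attained: "\<exists>e\<in>loss_vertices. loss_cvar x y c \<le> (\<Sum>s\<in>UNIV. e$s * (c \<bullet> G x y s))"
  by (rule cvar_attained_at_vertex[OF p_nonneg p_sum alpha loss_vertices(2)])

definition bench_mean :: "real^'k \<Rightarrow> real^'d" where
  "bench_mean e = (\<Sum>k\<in>UNIV. e$k *\<^sub>R z k)"

lemma inner_bench_mean: "c \<bullet> bench_mean e = (\<Sum>k\<in>UNIV. e$k * (c \<bullet> z k))"
  by (simp add: bench_mean_def inner_sum_right)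

lemma bench_vertex_le_cvar: "e \<in> bench_vertices \<Longrightarrow> c \<bullet> bench_mean e \<le> bench_cvar c"
  unfolding inner_bench_mean by (rule vertex_le_cvar[OF qZ_nonneg bench_vertices(2)])

lemma bench_cvar_attained: "\<exists>e\<in>bench_vertices. bench_cvar c \<le> c \<bullet> bench_mean e"
  unfolding inner_bench_mean
  by (rule cvar_attained_at_vertex[OF qZ_nonneg qZ_sum alpha bench_vertices(2)])

text \<open>The part of \<open>C\<close> on which the benchmark vertex \<open>e\<close> attains \<open>bench_cvar\<close>; there the
  benchmark CVaR is the linear function \<open>c \<bullet> bench_mean e\<close>.\<close>
definition "cell e = C \<inter> {c. \<forall>e'\<in>bench_vertices. c \<bullet> bench_mean e' \<le> c \<bullet> bench_mean e}"

lemma polytope_cell: "polytope (cell e)"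
proof -
  have eq: "cell e = C \<inter> \<Inter>((\<lambda>e'. {c. (bench_mean e' - bench_mean e) \<bullet> c \<le> 0}) ` bench_vertices)"
    unfolding cell_def by (auto simp: inner_diff_left inner_diff_right inner_commute)
  have "polyhedron (cell e)" unfolding eq using bench_vertices(1) C_poly
    by (intro polyhedron_Int polyhedron_Inter) (auto simp: polyhedron_halfspace_le)
  moreover have "bounded (cell e)"
    by (rule bounded_subset[OF bounded_unit_simplex]) (use C_simplex in \<open>auto simp: cell_def\<close>)
  ultimately show ?thesis by (simp add: polytope_eq_bounded_polyhedron)
qed

definition "cell_vertices e = (SOME V. finite V \<and> convex hull V = cell e)"

lemma cell_vertices: "finite (cell_vertices e)" "convex hull (cell_vertices e) = cell e"
  using someI_ex[OF polytope_vertices_exist[OF polytope_cell]] unfolding cell_vertices_def by auto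

lemma cell_vertices_subset: "cell_vertices e \<subseteq> cell e"
  using hull_subset[of "cell_vertices e" convex] cell_vertices(2) by blast

definition "critical_points = (\<Union>e\<in>bench_vertices. cell_vertices e)"

lemma critical_points: "finite critical_points" "critical_points \<subseteq> C"
  using bench_vertices(1) cell_vertices(1) cell_vertices_subset
  by (auto simp: critical_points_def cell_def)

text \<open>The semi-infinite CVaR constraint reduces to finitely many linear ones: on each cell the
  benchmark side is linear in \<open>c\<close>, so every loss expectation \<open>c \<bullet> (\<Sum>s. e$s *\<^sub>R G x y s)\<close>
  is dominated there as soon as it is dominated at the vertices of the cell.\<close>
lemma cvar_constraint_iff_finite:
  "(\<forall>c\<in>C. loss_cvar x y c \<le> bench_cvar c) \<longleftrightarrow>
   (\<forall>c\<in>critical_points. \<forall>e\<in>loss_vertices. (\<Sum>s\<in>UNIV. e$s * (c \<bullet> G x y s)) \<le> bench_cvar c)"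
proof
  assume "\<forall>c\<in>C. loss_cvar x y c \<le> bench_cvar c"
  then show "\<forall>c\<in>critical_points. \<forall>e\<in>loss_vertices. (\<Sum>s\<in>UNIV. e$s * (c \<bullet> G x y s)) \<le> bench_cvar c"
    using critical_points(2) loss_vertex_le_cvar by (meson order_trans subsetD)
next
  assume H: "\<forall>c\<in>critical_points. \<forall>e\<in>loss_vertices. (\<Sum>s\<in>UNIV. e$s * (c \<bullet> G x y s)) \<le> bench_cvar c"
  show "\<forall>c\<in>C. loss_cvar x y c \<le> bench_cvar c"
  proof
    fix c assume "c \<in> C"
    obtain e0 where e0: "e0 \<in> bench_vertices"
        "c \<bullet> bench_mean e0 = Max ((\<lambda>e. c \<bullet> bench_mean e) ` bench_vertices)"
      using Max_in[of "(\<lambda>e. c \<bullet> bench_mean e) ` bench_vertices"]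
        bench_vertices(1) bench_vertices_nonempty
      by (metis (no_types, lifting) finite_imageI image_iff image_is_empty)
    have "c \<in> cell e0" using \<open>c \<in> C\<close> e0 bench_vertices(1) by (auto simp: cell_def)
    obtain e where e: "e \<in> loss_vertices" "loss_cvar x y c \<le> (\<Sum>s\<in>UNIV. e$s * (c \<bullet> G x y s))"
      using loss_cvar_attained by blast
    define l where "l = (\<Sum>s\<in>UNIV. e$s *\<^sub>R G x y s) - bench_mean e0"
    have l: "l \<bullet> c' = (\<Sum>s\<in>UNIV. e$s * (c' \<bullet> G x y s)) - c' \<bullet> bench_mean e0" for c'
      by (simp add: l_def inner_commute[of _ c'] inner_diff_right inner_sum_right)
    have "l \<bullet> v \<le> 0" if v: "v \<in> cell_vertices e0" for v
    proof -
      obtain e1 where e1: "e1 \<in> bench_vertices" "bench_cvar v \<le> v \<bullet> bench_mean e1"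
        using bench_cvar_attained by blast
      moreover have "v \<bullet> bench_mean e1 \<le> v \<bullet> bench_mean e0"
        using cell_vertices_subset v e1(1) by (auto simp: cell_def)
      moreover have "v \<in> critical_points" using v e0(1) by (auto simp: critical_points_def)
      ultimately show ?thesis unfolding l using H e(1) by fastforce
    qed
    moreover obtain v where "v \<in> cell_vertices e0" "l \<bullet> c \<le> l \<bullet> v"
      using convex_hull_inner_le_generator[of c "cell_vertices e0" l] \<open>c \<in> cell e0\<close> cell_vertices(2)
      by auto
    ultimately have "l \<bullet> c \<le> 0" by fastforce
    then have "(\<Sum>s\<in>UNIV. e$s * (c \<bullet> G x y s)) \<le> c \<bullet> bench_mean e0" unfolding l by simp
    also have "\<dots> \<le> bench_cvar c" using bench_vertex_le_cvar e0(1) by blast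
    finally show "loss_cvar x y c \<le> bench_cvar c" using e(2) by linarith
  qed
qed

end

text \<open>Rows of a finite LP equivalent to (LinearP), each read as \<open>lp_rhs i \<le> lp_normal i \<bullet> (x, Y)\<close>:
  \<open>A x \<le> b\<close>, \<open>x \<ge> 0\<close>, \<open>Y \<ge> 0\<close>, \<open>T s x + W s (Y $ s) \<ge> h s\<close>, and one CVaR cut for every critical
  point \<open>c\<close> and vertex \<open>e\<close> of the envelope of \<open>p\<close>. The second-stage decisions are packed into
  \<open>Y :: real^'n2^'s\<close> so that the LP lives in a Euclidean space.\<close>
datatype ('m1, 'n1, 's, 'n2, 'm2, 'c) lp_row =
  Row_A 'm1 | Row_x 'n1 | Row_y 's 'n2 | Row_T 's 'm2 | Row_cvar 'c

type_synonym ('m1, 'n1, 's, 'n2, 'm2, 'd) cvar_lp_row =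
  "('m1, 'n1, 's, 'n2, 'm2, (real^'d) \<times> (real^'s)) lp_row"

context cvar_lp_polyhedral
begin

definition lp_rows :: "('m1, 'n1, 's, 'n2, 'm2, 'd) cvar_lp_row set" where
  "lp_rows = range Row_A \<union> range Row_x \<union> (\<lambda>(s, j). Row_y s j) ` UNIV
  \<union> (\<lambda>(s, r). Row_T s r) ` UNIV \<union> Row_cvar ` (critical_points \<times> loss_vertices)"

definition lp_normal :: "('m1, 'n1, 's, 'n2, 'm2, 'd) cvar_lp_row \<Rightarrow> (real^'n1) \<times> (real^'n2^'s)" where
  "lp_normal i = (case i of
    Row_A r \<Rightarrow> (- (A $ r), 0)
  | Row_x j \<Rightarrow> (axis j 1, 0)
  | Row_y s j \<Rightarrow> (0, axis s (axis j 1))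
  | Row_T s r \<Rightarrow> (T s $ r, axis s (W s $ r))
  | Row_cvar (c, e) \<Rightarrow> (- (\<Sum>s\<in>UNIV. e$s *\<^sub>R (c v* gbar s)), - (\<chi> s. e$s *\<^sub>R (c v* gtil s))))"

definition lp_rhs :: "('m1, 'n1, 's, 'n2, 'm2, 'd) cvar_lp_row \<Rightarrow> real" where
  "lp_rhs i = (case i of
    Row_A r \<Rightarrow> - (b $ r) | Row_x j \<Rightarrow> 0 | Row_y s j \<Rightarrow> 0 | Row_T s r \<Rightarrow> h s $ r
  | Row_cvar (c, e) \<Rightarrow> - bench_cvar c)"

definition lp_cost :: "(real^'n1) \<times> (real^'n2^'s)" where
  "lp_cost = (f, \<chi> s. p s *\<^sub>R q s)"

lemma finite_lp_rows: "finite lp_rows"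
  using critical_points(1) loss_vertices(1) by (simp add: lp_rows_def)

lemma ball_lp_rows:
  "(\<forall>i\<in>lp_rows. P i) \<longleftrightarrow> (\<forall>r. P (Row_A r)) \<and> (\<forall>j. P (Row_x j)) \<and> (\<forall>s j. P (Row_y s j))
      \<and> (\<forall>s r. P (Row_T s r)) \<and> (\<forall>c\<in>critical_points. \<forall>e\<in>loss_vertices. P (Row_cvar (c, e)))"
  by (auto simp: lp_rows_def ball_Un)

lemma sum_lp_rows:
  fixes F :: "('m1, 'n1, 's, 'n2, 'm2, 'd) cvar_lp_row \<Rightarrow> 'v::comm_monoid_add"
  shows "(\<Sum>i\<in>lp_rows. F i) = (\<Sum>r\<in>UNIV. F (Row_A r)) + (\<Sum>j\<in>UNIV. F (Row_x j))
     + (\<Sum>s\<in>UNIV. \<Sum>j\<in>UNIV. F (Row_y s j)) + (\<Sum>s\<in>UNIV. \<Sum>r\<in>UNIV. F (Row_T s r))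
     + (\<Sum>c\<in>critical_points. \<Sum>e\<in>loss_vertices. F (Row_cvar (c, e)))"
proof -
  have fin: "finite (critical_points \<times> loss_vertices)"
    using critical_points(1) loss_vertices(1) by simp
  have "(\<Sum>i\<in>Row_cvar ` (critical_points \<times> loss_vertices). F i)
      = (\<Sum>c\<in>critical_points. \<Sum>e\<in>loss_vertices. F (Row_cvar (c, e)))"
    by (subst sum.reindex) (auto simp: inj_on_def sum.cartesian_product)
  moreover have "(\<Sum>i\<in>(\<lambda>(s, r). Row_T s r) ` UNIV. F i) = (\<Sum>s\<in>UNIV. \<Sum>r\<in>UNIV. F (Row_T s r))"
    by (subst sum.reindex) (auto simp: inj_on_def sum.cartesian_product case_prod_beta)
  moreover have "(\<Sum>i\<in>(\<lambda>(s, j). Row_y s j) ` UNIV. F i) = (\<Sum>s\<in>UNIV. \<Sum>j\<in>UNIV. F (Row_y s j))"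
    by (subst sum.reindex) (auto simp: inj_on_def sum.cartesian_product case_prod_beta)
  moreover have "(\<Sum>i\<in>range Row_x. F i) = (\<Sum>j\<in>UNIV. F (Row_x j))"
    by (subst sum.reindex) (auto simp: inj_on_def)
  moreover have "(\<Sum>i\<in>range Row_A. F i) = (\<Sum>r\<in>UNIV. F (Row_A r))"
    by (subst sum.reindex) (auto simp: inj_on_def)
  ultimately show ?thesis unfolding lp_rows_def
    by (subst sum.union_disjoint, use fin in auto)+
qed

lemma inner_lp_normal:
  "lp_normal (Row_A r) \<bullet> (x, Y) = - (A *v x) $ r"
  "lp_normal (Row_x j) \<bullet> (x, Y) = x $ j"
  "lp_normal (Row_y s k) \<bullet> (x, Y) = Y $ s $ k"
  "lp_normal (Row_T s i) \<bullet> (x, Y) = (T s *v x + W s *v Y $ s) $ i"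
  "lp_normal (Row_cvar (c, e)) \<bullet> (x, Y) = - (\<Sum>s\<in>UNIV. e$s * (c \<bullet> G x (\<lambda>s. Y$s) s))"
proof -
  show "lp_normal (Row_A r) \<bullet> (x, Y) = - (A *v x) $ r"
    by (simp add: lp_normal_def matrix_vector_mul_component)
  show "lp_normal (Row_x j) \<bullet> (x, Y) = x $ j" "lp_normal (Row_y s k) \<bullet> (x, Y) = Y $ s $ k"
    by (simp_all add: lp_normal_def inner_axis')
  show "lp_normal (Row_T s i) \<bullet> (x, Y) = (T s *v x + W s *v Y $ s) $ i"
    by (simp add: lp_normal_def inner_axis' matrix_vector_mul_component)
  have "(\<chi> s. e$s *\<^sub>R (c v* gtil s)) \<bullet> Y = (\<Sum>s\<in>UNIV. e$s * (c \<bullet> (gtil s *v Y $ s)))"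
    by (simp add: inner_vec_def[of "\<chi> s. e$s *\<^sub>R (c v* gtil s)"] dot_lmul_matrix)
  then show "lp_normal (Row_cvar (c, e)) \<bullet> (x, Y) = - (\<Sum>s\<in>UNIV. e$s * (c \<bullet> G x (\<lambda>s. Y$s) s))"
    by (simp add: lp_normal_def ghat_def inner_sum_left dot_lmul_matrix inner_add_right
        distrib_left sum.distrib)
qed

lemma inner_lp_cost: "lp_cost \<bullet> (x, Y) = oP (x, \<lambda>s. Y$s)"
  by (simp add: lp_cost_def objP_def inner_vec_def[of "\<chi> s. p s *\<^sub>R q s"])

lemma lp_feasible_iff: "(\<forall>i\<in>lp_rows. lp_rhs i \<le> lp_normal i \<bullet> (x, Y)) \<longleftrightarrow> (x, \<lambda>s. Y$s) \<in> FP"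
  unfolding ball_lp_rows inner_lp_normal
  by (simp add: lp_rhs_def feasP_def cvar_constraint_iff_finite)

end

section \<open>Strong duality\<close>

context cvar_lp
begin

lemma reduced_cost_x_add_scaled:
  assumes "\<And>s. finite (fsupp (n0 s))" "\<And>s. finite (fsupp (nr s))"
  shows "reduced_cost_x f' (l0 + t *\<^sub>R lr) (\<lambda>s c. n0 s c + t * nr s c) (\<lambda>s. p0 s + t *\<^sub>R pr s)
    = reduced_cost_x f' l0 n0 p0 + t *\<^sub>R reduced_cost_x 0 lr nr pr"
  by (simp add: reduced_cost_x_def fint_add_scaled[OF assms] vector_matrix_left_distrib
      scaleR_vector_matrix_assoc scaleR_add_right sum.distrib scaleR_sum_right algebra_simps)

lemma reduced_cost_y_add_scaled:
  assumes "finite (fsupp (n0 s))" "finite (fsupp (nr s))"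
  shows "reduced_cost_y q' (\<lambda>s c. n0 s c + t * nr s c) (\<lambda>s. p0 s + t *\<^sub>R pr s) s
    = reduced_cost_y q' n0 p0 s + t *\<^sub>R reduced_cost_y 0 nr pr s"
  by (simp add: reduced_cost_y_def fint_add_scaled[OF assms] vector_matrix_left_distrib
      scaleR_vector_matrix_assoc algebra_simps)

lemma objD_add_scaled:
  assumes "finite (fsupp m0)" "finite (fsupp mr)"
  shows "oD (l0 + t *\<^sub>R lr, \<lambda>c. m0 c + t * mr c, \<lambda>s c. n0 s c + t * nr s c, \<lambda>s. p0 s + t *\<^sub>R pr s)
    = oD (l0, m0, n0, p0) + t * oD (lr, mr, nr, pr)"
  by (simp add: objD_def fint_add_scaled[OF assms] inner_add_left algebra_simps sum.distrib
      sum_distrib_left)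

text \<open>\<open>feasD \<dots> 0 (\<lambda>_. 0) \<dots>\<close> is the recession cone of the dual feasible set.\<close>
lemma feasD_add_recession:
  assumes D0: "(l0, m0, n0, p0) \<in> FD" and Dr: "(lr, mr, nr, pr) \<in> feasD p \<alpha> C A 0 (\<lambda>_. 0) T W gbar gtil"
    and t: "0 \<le> t"
  shows "(l0 + t *\<^sub>R lr, \<lambda>c. m0 c + t * mr c, \<lambda>s c. n0 s c + t * nr s c, \<lambda>s. p0 s + t *\<^sub>R pr s) \<in> FD"
proof -
  note F0 = D0[unfolded mem_feasD_iff] and Fr = Dr[unfolded mem_feasD_iff]
  have fin: "\<And>s. finite (fsupp (n0 s))" "\<And>s. finite (fsupp (nr s))"
    using F0 Fr by (auto simp: fin_meas_def)
  have "(\<Sum>s\<in>UNIV. p s * (n0 s c + t * nr s c)) = m0 c + t * mr c" for c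
    using F0 Fr by (simp add: distrib_left sum.distrib sum_distrib_left[symmetric] algebra_simps)
  moreover have "n0 s c + t * nr s c \<le> (m0 c + t * mr c) / (1 - \<alpha>)" for s c
  proof -
    have "t * nr s c \<le> t * (mr c / (1 - \<alpha>))" using Fr t by (intro mult_left_mono) auto
    then show ?thesis using F0 by (simp add: add_divide_distrib add_mono)
  qed
  ultimately show ?thesis
    using F0 Fr t
    unfolding mem_feasD_iff reduced_cost_x_add_scaled[OF fin] reduced_cost_y_add_scaled[OF fin]
    by (simp add: fin_meas_add_scaled)
qed

end

context cvar_lp_polyhedral
begin

lemma loss_vertex_bounds:
  "e \<in> loss_vertices \<Longrightarrow> 0 \<le> e$s \<and> e$s \<le> p s / (1 - \<alpha>) \<and> (\<Sum>s\<in>UNIV. e$s) = 1"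
  using hull_subset[of loss_vertices convex] loss_vertices(2) by (auto simp: cvar_envelope_def)

text \<open>The multiplier of the CVaR cut \<open>(c, e)\<close> becomes a point mass at \<open>c\<close>, shared among the
  scenarios in proportion to \<open>e$s / p s\<close>; the envelope bound \<open>e$s \<le> p s / (1 - \<alpha>)\<close> turns into the
  dual constraint \<open>nu s \<le> mu / (1 - \<alpha>)\<close>.\<close>
definition dual_of_multipliers ::
    "(('m1, 'n1, 's, 'n2, 'm2, 'd) cvar_lp_row \<Rightarrow> real)
     \<Rightarrow> (real^'m1) \<times> (real^'d \<Rightarrow> real) \<times> ('s \<Rightarrow> real^'d \<Rightarrow> real) \<times> ('s \<Rightarrow> real^'m2)" where
  "dual_of_multipliers y =
     ((\<chi> r. y (Row_A r)),
      (\<lambda>c. if c \<in> critical_points then \<Sum>e\<in>loss_vertices. y (Row_cvar (c, e)) else 0),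
      (\<lambda>s c. if c \<in> critical_points then \<Sum>e\<in>loss_vertices. y (Row_cvar (c, e)) * e$s / p s else 0),
      (\<lambda>s. \<chi> r. y (Row_T s r) / p s))"

lemma dual_of_multipliers_eqD:
  assumes "dual_of_multipliers y = (lam, mu, nu, piv)"
  shows "lam = (\<chi> r. y (Row_A r))"
    and "mu = (\<lambda>c. if c \<in> critical_points then \<Sum>e\<in>loss_vertices. y (Row_cvar (c, e)) else 0)"
    and "nu = (\<lambda>s c. if c \<in> critical_points
                        then \<Sum>e\<in>loss_vertices. y (Row_cvar (c, e)) * e$s / p s else 0)"
    and "piv = (\<lambda>s. \<chi> r. y (Row_T s r) / p s)"
  using assms by (auto simp: dual_of_multipliers_def)

lemma dual_of_multipliers_fsupp:
  assumes "dual_of_multipliers y = (lam, mu, nu, piv)"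
  shows "fsupp mu \<subseteq> critical_points" "fsupp (nu s) \<subseteq> critical_points"
  using dual_of_multipliers_eqD[OF assms] by (auto simp: fsupp_def)

lemma dual_of_multipliers_measures:
  assumes y: "\<forall>i\<in>lp_rows. 0 \<le> y i" and D: "dual_of_multipliers y = (lam, mu, nu, piv)"
  shows "\<forall>i. 0 \<le> lam $ i" "fin_meas C mu" "\<forall>s. fin_meas C (nu s)" "\<forall>s i. 0 \<le> piv s $ i"
    "\<forall>c. (\<Sum>s\<in>UNIV. p s * nu s c) = mu c" "\<forall>s c. nu s c \<le> mu c / (1 - \<alpha>)"
proof -
  note y = y[unfolded ball_lp_rows] and D = dual_of_multipliers_eqD[OF D]
  note e = loss_vertex_bounds
  show "\<forall>i. 0 \<le> lam $ i" "\<forall>s i. 0 \<le> piv s $ i"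
    using y p_pos by (simp_all add: D less_imp_le)
  have "0 \<le> mu c" "0 \<le> nu s c" for s c
    using y e p_pos by (auto simp: D intro!: sum_nonneg divide_nonneg_pos)
  moreover have "finite (fsupp mu)" "fsupp mu \<subseteq> C" "finite (fsupp (nu s))" "fsupp (nu s) \<subseteq> C" for s
    using dual_of_multipliers_fsupp(1)[OF assms(2)] dual_of_multipliers_fsupp(2)[OF assms(2), of s]
      critical_points by (auto intro: finite_subset)
  ultimately show "fin_meas C mu" "\<forall>s. fin_meas C (nu s)" by (simp_all add: fin_meas_def)
  show "\<forall>c. (\<Sum>s\<in>UNIV. p s * nu s c) = mu c"
  proof
    fix c
    have "(\<Sum>s\<in>UNIV. \<Sum>e\<in>loss_vertices. y (Row_cvar (c, e)) * e$s)
        = (\<Sum>e\<in>loss_vertices. y (Row_cvar (c, e)) * (\<Sum>s\<in>UNIV. e$s))"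
      by (subst sum.swap) (simp add: sum_distrib_left)
    then show "(\<Sum>s\<in>UNIV. p s * nu s c) = mu c"
      using p_pos e by (simp add: D sum_distrib_left less_imp_neq[symmetric])
  qed
  show "\<forall>s c. nu s c \<le> mu c / (1 - \<alpha>)"
  proof (intro allI)
    fix s c
    have "y (Row_cvar (c, e)) * e$s / p s \<le> y (Row_cvar (c, e)) / (1 - \<alpha>)"
      if "c \<in> critical_points" "e \<in> loss_vertices" for e
    proof -
      have "e$s / p s \<le> 1 / (1 - \<alpha>)"
        using e[OF that(2), of s] p_pos[of s] alpha by (simp add: divide_le_eq field_simps)
      moreover have "0 \<le> y (Row_cvar (c, e))" using y that by blast
      ultimately have "y (Row_cvar (c, e)) * (e$s / p s) \<le> y (Row_cvar (c, e)) * (1 / (1 - \<alpha>))"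
        by (rule mult_left_mono)
      then show ?thesis by simp
    qed
    then show "nu s c \<le> mu c / (1 - \<alpha>)" by (simp add: D sum_divide_distrib sum_mono)
  qed
qed

lemma scaled_fint_of_multipliers:
  assumes D: "dual_of_multipliers y = (lam, mu, nu, piv)"
  shows "p s *\<^sub>R fint (nu s) u
    = (\<Sum>c\<in>critical_points. \<Sum>e\<in>loss_vertices. (y (Row_cvar (c, e)) * e$s) *\<^sub>R u c)"
proof -
  have "p s *\<^sub>R fint (nu s) u = (\<Sum>c\<in>critical_points. (p s * nu s c) *\<^sub>R u c)"
    by (simp add: fint_eq_sum_superset[OF critical_points(1) dual_of_multipliers_fsupp(2)[OF D]]
        scaleR_sum_right)
  also have "\<dots> = (\<Sum>c\<in>critical_points. (\<Sum>e\<in>loss_vertices. y (Row_cvar (c, e)) * e$s) *\<^sub>R u c)"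
    using p_pos[of s] by (intro sum.cong) (simp_all add: dual_of_multipliers_eqD(3)[OF D]
        sum_distrib_left less_imp_neq[symmetric])
  finally show ?thesis by (simp add: scaleR_sum_left)
qed

lemma lp_normal_components:
  "fst (lp_normal (Row_A r)) = - (A $ r)" "fst (lp_normal (Row_x j)) = axis j 1"
  "fst (lp_normal (Row_y s k)) = 0" "fst (lp_normal (Row_T s i)) = T s $ i"
  "fst (lp_normal (Row_cvar (c, e))) = - (\<Sum>s\<in>UNIV. e$s *\<^sub>R (c v* gbar s))"
  "snd (lp_normal (Row_A r)) = 0" "snd (lp_normal (Row_x j)) = 0"
  "snd (lp_normal (Row_y s k)) = axis s (axis k 1)" "snd (lp_normal (Row_T s i)) = axis s (W s $ i)"
  "snd (lp_normal (Row_cvar (c, e))) = - (\<chi> s. e$s *\<^sub>R (c v* gtil s))"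
  by (simp_all add: lp_normal_def)

lemma fst_lp_normal_combination:
  assumes D: "dual_of_multipliers y = (lam, mu, nu, piv)"
  shows "fst (\<Sum>i\<in>lp_rows. y i *\<^sub>R lp_normal i) = (\<chi> j. y (Row_x j)) - reduced_cost_x 0 lam nu piv"
proof -
  note D' = dual_of_multipliers_eqD[OF D]
  have "(\<Sum>r\<in>UNIV. y (Row_A r) *\<^sub>R - (A $ r)) = - (lam v* A)"
    by (simp add: D'(1) vector_matrix_mult_eq_sum_rows sum_negf)
  moreover have "(\<Sum>i\<in>UNIV. y (Row_T s i) *\<^sub>R T s $ i) = p s *\<^sub>R (piv s v* T s)" for s
    using p_pos[of s] by (simp add: D'(4) vector_matrix_mult_eq_sum_rows scaleR_sum_right
        less_imp_neq[symmetric])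
  moreover have "(\<Sum>c\<in>critical_points. \<Sum>e\<in>loss_vertices.
        y (Row_cvar (c, e)) *\<^sub>R (\<Sum>s\<in>UNIV. e$s *\<^sub>R (c v* gbar s)))
      = (\<Sum>s\<in>UNIV. p s *\<^sub>R fint (nu s) (\<lambda>c. c v* gbar s))"
  proof -
    have "(\<Sum>c\<in>critical_points. \<Sum>e\<in>loss_vertices.
          y (Row_cvar (c, e)) *\<^sub>R (\<Sum>s\<in>UNIV. e$s *\<^sub>R (c v* gbar s)))
        = (\<Sum>c\<in>critical_points. \<Sum>s\<in>UNIV. \<Sum>e\<in>loss_vertices. (y (Row_cvar (c, e)) * e$s) *\<^sub>R (c v* gbar s))"
      by (simp add: scaleR_sum_right sum.swap[of _ loss_vertices])
    also have "\<dots> = (\<Sum>s\<in>UNIV. \<Sum>c\<in>critical_points. \<Sum>e\<in>loss_vertices.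
          (y (Row_cvar (c, e)) * e$s) *\<^sub>R (c v* gbar s))"
      by (rule sum.swap)
    finally show ?thesis by (simp add: scaled_fint_of_multipliers[OF D])
  qed
  ultimately show ?thesis
    by (simp add: fst_sum sum_lp_rows lp_normal_components sum_scaled_axis sum_negf reduced_cost_x_def)
qed

lemma snd_lp_normal_combination:
  assumes D: "dual_of_multipliers y = (lam, mu, nu, piv)"
  shows "snd (\<Sum>i\<in>lp_rows. y i *\<^sub>R lp_normal i) $ s
    = (\<chi> j. y (Row_y s j)) - p s *\<^sub>R reduced_cost_y 0 nu piv s"
proof -
  note D' = dual_of_multipliers_eqD[OF D]
  have ax: "axis s' v $ s = (if s' = s then v else 0)" for s' and v :: "real^'z::finite"
    by (simp add: axis_def)
  have "(\<Sum>s'\<in>UNIV. \<Sum>j\<in>UNIV. y (Row_y s' j) *\<^sub>R axis s' (axis j 1)) $ s = (\<chi> j. y (Row_y s j))"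
  proof -
    have "(\<Sum>s'\<in>UNIV. \<Sum>j\<in>UNIV. y (Row_y s' j) *\<^sub>R axis s' (axis j (1::real))) $ s
        = (\<Sum>s'\<in>UNIV. \<Sum>j\<in>UNIV. if s' = s then y (Row_y s j) *\<^sub>R axis j 1 else 0)"
      by (simp add: sum_component ax if_distrib cong: if_cong)
    then show ?thesis by (simp only: sum_if_eq_outer sum_scaled_axis)
  qed
  moreover have "(\<Sum>s'\<in>UNIV. \<Sum>i\<in>UNIV. y (Row_T s' i) *\<^sub>R axis s' (W s' $ i)) $ s = p s *\<^sub>R (piv s v* W s)"
  proof -
    have "(\<Sum>s'\<in>UNIV. \<Sum>i\<in>UNIV. y (Row_T s' i) *\<^sub>R axis s' (W s' $ i)) $ s
        = (\<Sum>s'\<in>UNIV. \<Sum>i\<in>UNIV. if s' = s then y (Row_T s i) *\<^sub>R W s $ i else 0)"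
      by (simp add: sum_component ax if_distrib cong: if_cong)
    also have "\<dots> = (\<Sum>i\<in>UNIV. y (Row_T s i) *\<^sub>R W s $ i)" by (simp only: sum_if_eq_outer)
    also have "\<dots> = p s *\<^sub>R (piv s v* W s)"
      using p_pos[of s] by (simp add: D'(4) vector_matrix_mult_eq_sum_rows scaleR_sum_right
          less_imp_neq[symmetric])
    finally show ?thesis .
  qed
  moreover have "(\<Sum>c\<in>critical_points. \<Sum>e\<in>loss_vertices.
        y (Row_cvar (c, e)) *\<^sub>R - (\<chi> s. e$s *\<^sub>R (c v* gtil s))) $ s
      = - (p s *\<^sub>R fint (nu s) (\<lambda>c. c v* gtil s))"
    by (simp add: sum_component scaled_fint_of_multipliers[OF D] sum_negf)
  ultimately show ?thesis
    by (simp add: snd_sum sum_lp_rows lp_normal_components reduced_cost_y_def algebra_simps)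
qed

lemma lp_rhs_combination:
  assumes D: "dual_of_multipliers y = (lam, mu, nu, piv)"
  shows "(\<Sum>i\<in>lp_rows. y i * lp_rhs i) = oD (lam, mu, nu, piv)"
proof -
  note D' = dual_of_multipliers_eqD[OF D]
  have "(\<Sum>r\<in>UNIV. y (Row_A r) * - (b $ r)) = - (lam \<bullet> b)"
    by (simp add: D'(1) inner_vec_def sum_negf)
  moreover have "(\<Sum>i\<in>UNIV. y (Row_T s i) * h s $ i) = p s * (piv s \<bullet> h s)" for s
    using p_pos[of s] by (simp add: D'(4) inner_vec_def sum_distrib_left less_imp_neq[symmetric])
  moreover have "fint mu (\<lambda>c. bench_cvar c)
      = (\<Sum>c\<in>critical_points. \<Sum>e\<in>loss_vertices. y (Row_cvar (c, e)) * bench_cvar c)"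
  proof -
    have "fint mu (\<lambda>c. bench_cvar c) = (\<Sum>c\<in>critical_points. mu c * bench_cvar c)"
      by (simp add: fint_eq_sum_superset[OF critical_points(1) dual_of_multipliers_fsupp(1)[OF D]])
    also have "\<dots> = (\<Sum>c\<in>critical_points. \<Sum>e\<in>loss_vertices. y (Row_cvar (c, e)) * bench_cvar c)"
      by (rule sum.cong[OF refl]) (simp add: D'(2) sum_distrib_right)
    finally show ?thesis .
  qed
  ultimately show ?thesis
    by (simp add: sum_lp_rows lp_rhs_def objD_def sum_negf)
qed

lemma dual_of_multipliers_feasible:
  assumes y: "\<forall>i\<in>lp_rows. 0 \<le> y i"
    and comb: "(\<Sum>i\<in>lp_rows. y i *\<^sub>R lp_normal i) = (f', \<chi> s. p s *\<^sub>R q' s)"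
  shows "dual_of_multipliers y \<in> feasD p \<alpha> C A f' q' T W gbar gtil"
proof -
  obtain lam mu nu piv where D: "dual_of_multipliers y = (lam, mu, nu, piv)"
    by (metis prod_cases4)
  have "f' = (\<chi> j. y (Row_x j)) - reduced_cost_x 0 lam nu piv"
    using arg_cong[OF comb, of fst] by (simp only: fst_lp_normal_combination[OF D] fst_conv)
  then have x: "reduced_cost_x f' lam nu piv = (\<chi> j. y (Row_x j))"
    by (simp add: reduced_cost_x_def)
  have "0 \<le> reduced_cost_y (q' s) nu piv s $ j" for s j
  proof -
    have "p s *\<^sub>R q' s = (\<chi> j. y (Row_y s j)) - p s *\<^sub>R reduced_cost_y 0 nu piv s"
      using arg_cong[OF comb, of "\<lambda>v. snd v $ s"]
      by (simp only: snd_lp_normal_combination[OF D] snd_conv vec_lambda_beta)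
    then have "p s *\<^sub>R reduced_cost_y (q' s) nu piv s = (\<chi> j. y (Row_y s j))"
      by (simp add: reduced_cost_y_def algebra_simps)
    from arg_cong[OF this, of "\<lambda>v. v $ j"]
    have "p s * reduced_cost_y (q' s) nu piv s $ j = y (Row_y s j)" by simp
    moreover have "0 \<le> y (Row_y s j)" using y by (simp add: ball_lp_rows)
    ultimately show ?thesis using p_pos[of s] by (metis linorder_not_less mult_pos_neg)
  qed
  then show ?thesis
    using y dual_of_multipliers_measures[OF y D] unfolding D mem_feasD_iff x ball_lp_rows by simp
qed

lemma dual_attains_primal_bound:
  assumes feasible: "(x0, y0) \<in> FP" and bound: "\<forall>xy\<in>FP. m \<le> oP xy"
  shows "\<exists>D\<in>FD. m \<le> oD D"
proof -
  have "\<exists>y. (\<forall>i\<in>lp_rows. 0 \<le> y i) \<and> (\<Sum>i\<in>lp_rows. y i *\<^sub>R lp_normal i) = lp_cost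
      \<and> m \<le> (\<Sum>i\<in>lp_rows. y i * lp_rhs i)"
  proof (rule farkas_bounded_below[OF finite_lp_rows])
    show "\<forall>i\<in>lp_rows. lp_rhs i \<le> lp_normal i \<bullet> (x0, \<chi> s. y0 s)"
      using feasible by (simp add: lp_feasible_iff)
  next
    fix v assume "\<forall>i\<in>lp_rows. lp_rhs i \<le> lp_normal i \<bullet> v"
    moreover obtain x Y where "v = (x, Y)" by (cases v)
    ultimately show "m \<le> lp_cost \<bullet> v" using bound by (simp add: lp_feasible_iff inner_lp_cost)
  qed
  then obtain y where y: "\<forall>i\<in>lp_rows. 0 \<le> y i" "(\<Sum>i\<in>lp_rows. y i *\<^sub>R lp_normal i) = lp_cost"
    "m \<le> (\<Sum>i\<in>lp_rows. y i * lp_rhs i)" by blast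
  obtain lam mu nu piv where D: "dual_of_multipliers y = (lam, mu, nu, piv)" by (metis prod_cases4)
  have "(lam, mu, nu, piv) \<in> FD"
    using dual_of_multipliers_feasible[OF y(1)] y(2) D by (simp add: lp_cost_def)
  moreover have "m \<le> oD (lam, mu, nu, piv)" using y(3) lp_rhs_combination[OF D] by simp
  ultimately show ?thesis by blast
qed

text \<open>If the primal is infeasible, a Farkas certificate of infeasibility is a recession direction
  of the dual along which the dual objective strictly increases.\<close>
lemma dual_unbounded_if_primal_infeasible:
  assumes infeasible: "FP = {}" and D0: "(l0, m0, n0, p0) \<in> FD"
  shows "\<not> bdd_above (oD ` FD)"
proof
  assume "bdd_above (oD ` FD)"
  then obtain M where M: "\<And>D. D \<in> FD \<Longrightarrow> oD D \<le> M" by (auto simp: bdd_above_def)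
  have "\<nexists>v. \<forall>i\<in>lp_rows. lp_rhs i \<le> lp_normal i \<bullet> v"
    using infeasible by (auto simp: lp_feasible_iff)
  then obtain y where y: "\<forall>i\<in>lp_rows. 0 \<le> y i" "(\<Sum>i\<in>lp_rows. y i *\<^sub>R lp_normal i) = 0"
      "0 < (\<Sum>i\<in>lp_rows. y i * lp_rhs i)"
    using farkas_infeasible[OF finite_lp_rows] by blast
  obtain lr mr nr pr where Dr: "dual_of_multipliers y = (lr, mr, nr, pr)" by (metis prod_cases4)
  have "(0::real^'n1, \<chi> s. p s *\<^sub>R (\<lambda>_. 0::real^'n2) s) = 0" by (simp add: zero_prod_def vec_eq_iff)
  then have ray: "(lr, mr, nr, pr) \<in> feasD p \<alpha> C A 0 (\<lambda>_. 0) T W gbar gtil"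
    using dual_of_multipliers_feasible[OF y(1), of 0 "\<lambda>_. 0"] y(2) Dr by simp
  define \<delta> where "\<delta> = oD (lr, mr, nr, pr)"
  have "0 < \<delta>" using y(3) lp_rhs_combination[OF Dr] by (simp add: \<delta>_def)
  have fin: "finite (fsupp m0)" "finite (fsupp mr)"
    using D0 ray by (auto simp: mem_feasD_iff fin_meas_def)
  define t where "t = (\<bar>M\<bar> + \<bar>oD (l0, m0, n0, p0)\<bar> + 1) / \<delta>"
  define Dt where
    "Dt = (l0 + t *\<^sub>R lr, \<lambda>c. m0 c + t * mr c, \<lambda>s c. n0 s c + t * nr s c, \<lambda>s. p0 s + t *\<^sub>R pr s)"
  have "0 \<le> t" using \<open>0 < \<delta>\<close> by (simp add: t_def)
  then have "oD Dt \<le> M" using M feasD_add_recession[OF D0 ray] by (simp add: Dt_def)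
  moreover have "oD Dt = oD (l0, m0, n0, p0) + t * \<delta>"
    unfolding Dt_def \<delta>_def by (rule objD_add_scaled[OF fin])
  moreover have "t * \<delta> = \<bar>M\<bar> + \<bar>oD (l0, m0, n0, p0)\<bar> + 1"
    using \<open>0 < \<delta>\<close> by (simp add: t_def)
  ultimately show False by linarith
qed

lemma strong_duality:
  assumes "FP \<noteq> {}" and "bdd_below (oP ` FP)"
  shows "FD \<noteq> {}" and "bdd_above (oD ` FD)" and "Inf (oP ` FP) = Sup (oD ` FD)"
proof -
  obtain x0 y0 where xy0: "(x0, y0) \<in> FP" using assms(1) by auto
  have "\<forall>xy\<in>FP. Inf (oP ` FP) \<le> oP xy" using assms(2) by (auto intro: cInf_lower)
  then obtain D where D: "D \<in> FD" "Inf (oP ` FP) \<le> oD D"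
    using dual_attains_primal_bound[OF xy0] by blast
  then show "FD \<noteq> {}" by blast
  show bdd: "bdd_above (oD ` FD)"
    using weak_duality[OF xy0] by (intro bdd_aboveI2)
  have "Sup (oD ` FD) \<le> Inf (oP ` FP)"
    using weak_duality assms(1) D(1) by (intro cSup_least cInf_greatest) auto
  moreover have "Inf (oP ` FP) \<le> Sup (oD ` FD)"
    using D cSup_upper[OF _ bdd, of "oD D"] by auto
  ultimately show "Inf (oP ` FP) = Sup (oD ` FD)" by simp
qed

lemma primal_bounded_if_dual_bounded:
  assumes "FD \<noteq> {}" and "bdd_above (oD ` FD)"
  shows "FP \<noteq> {}" and "bdd_below (oP ` FP)"
proof -
  obtain l0 m0 n0 p0 where D0: "(l0, m0, n0, p0) \<in> FD" using assms(1) by (metis ex_in_conv prod_cases4)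
  show "FP \<noteq> {}" using dual_unbounded_if_primal_infeasible[OF _ D0] assms(2) by blast
  show "bdd_below (oP ` FP)" using weak_duality[OF _ D0] by (intro bdd_belowI2)
qed

lemma optimal_iff_no_gap:
  assumes xy: "xy \<in> FP" and D: "D \<in> FD"
  shows "(\<forall>xy'\<in>FP. oP xy \<le> oP xy') \<and> (\<forall>D'\<in>FD. oD D' \<le> oD D) \<longleftrightarrow> oP xy = oD D"
proof
  assume opt: "(\<forall>xy'\<in>FP. oP xy \<le> oP xy') \<and> (\<forall>D'\<in>FD. oD D' \<le> oD D)"
  have "bdd_below (oP ` FP)" using weak_duality[OF _ D] by (intro bdd_belowI2)
  then have "Inf (oP ` FP) = Sup (oD ` FD)" using xy by (intro strong_duality) auto
  moreover have "Inf (oP ` FP) = oP xy" by (rule cInf_eq_minimum) (use xy opt in auto)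
  moreover have "Sup (oD ` FD) = oD D" by (rule cSup_eq_maximum) (use D opt in auto)
  ultimately show "oP xy = oD D" by simp
next
  assume "oP xy = oD D"
  then show "(\<forall>xy'\<in>FP. oP xy \<le> oP xy') \<and> (\<forall>D'\<in>FD. oD D' \<le> oD D)"
    using weak_duality[OF xy] weak_duality[OF _ D] by auto
qed

end

theorem theorem1:
  fixes p :: "'s::finite \<Rightarrow> real" and \<alpha> :: real
    and qZ :: "'k::finite \<Rightarrow> real" and z :: "'k \<Rightarrow> real^'d::finite"
    and C :: "(real^'d) set"
    and A :: "real^'n1::finite^'m1::finite" and b :: "real^'m1" and f :: "real^'n1"
    and q :: "'s \<Rightarrow> real^'n2::finite" and T :: "'s \<Rightarrow> real^'n1^'m2::finite"
    and W :: "'s \<Rightarrow> real^'n2^'m2" and h :: "'s \<Rightarrow> real^'m2"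
    and gbar :: "'s \<Rightarrow> real^'n1^'d" and gtil :: "'s \<Rightarrow> real^'n2^'d"
  assumes p_pos: "\<And>s. 0 < p s" and p_sum: "(\<Sum>s\<in>UNIV. p s) = 1"
    and qZ_nonneg: "\<And>k. 0 \<le> qZ k" and qZ_sum: "(\<Sum>k\<in>UNIV. qZ k) = 1"
    and alpha: "0 \<le> \<alpha>" "\<alpha> < 1"
    and C_poly: "polyhedron C" and C_ne: "C \<noteq> {}" and C_simplex: "C \<subseteq> unit_simplex"
  defines "FP \<equiv> feasP p \<alpha> C qZ z A b T W h gbar gtil"
    and "FD \<equiv> feasD p \<alpha> C A f q T W gbar gtil"
    and "oP \<equiv> objP p f q"
    and "oD \<equiv> objD p \<alpha> qZ z b h"
  shows
    "((FP \<noteq> {} \<and> bdd_below (oP ` FP)) \<longleftrightarrow> (FD \<noteq> {} \<and> bdd_above (oD ` FD)))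
     \<and> ((FP \<noteq> {} \<and> bdd_below (oP ` FP)) \<longrightarrow> Inf (oP ` FP) = Sup (oD ` FD))
     \<and> (\<forall>x y lam mu nu piv. (x, y) \<in> FP \<longrightarrow> (lam, mu, nu, piv) \<in> FD \<longrightarrow>
          ((\<forall>xy'\<in>FP. oP (x, y) \<le> oP xy') \<and> (\<forall>D'\<in>FD. oD D' \<le> oD (lam, mu, nu, piv))
           \<longleftrightarrow>
           (support C mu \<subseteq> {c. cvar p \<alpha> (\<lambda>s. c \<bullet> ghat gbar gtil x y s) = cvar qZ \<alpha> (\<lambda>k. c \<bullet> z k)})
           \<and> (\<forall>s. support C (nu s) \<subseteq>
                 {c. var p \<alpha> (\<lambda>s'. c \<bullet> ghat gbar gtil x y s') \<le> ereal (c \<bullet> ghat gbar gtil x y s)})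
           \<and> (\<forall>s. support C (\<lambda>c. mu c / (1 - \<alpha>) - nu s c) \<subseteq>
                 {c. ereal (c \<bullet> ghat gbar gtil x y s) \<le> var p \<alpha> (\<lambda>s'. c \<bullet> ghat gbar gtil x y s')})
           \<and> lam \<bullet> (b - A *v x) = 0
           \<and> (\<forall>s. piv s \<bullet> (T s *v x + W s *v y s - h s) = 0)
           \<and> (f + lam v* A - (\<Sum>s\<in>UNIV. p s *\<^sub>R (piv s v* T s))
                + (\<Sum>s\<in>UNIV. p s *\<^sub>R fint (nu s) (\<lambda>c. c v* gbar s))) \<bullet> x = 0
           \<and> (\<forall>s. (q s - piv s v* W s + fint (nu s) (\<lambda>c. c v* gtil s)) \<bullet> y s = 0)))"
proof -
  interpret cvar_lp_polyhedral p \<alpha> qZ z C A b f q T W h gbar gtil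
    by unfold_locales (use p_pos p_sum qZ_nonneg qZ_sum alpha C_poly C_simplex in auto)
  have "(FP \<noteq> {} \<and> bdd_below (oP ` FP)) \<longleftrightarrow> (FD \<noteq> {} \<and> bdd_above (oD ` FD))"
    unfolding FP_def FD_def oP_def oD_def by (meson strong_duality(1,2) primal_bounded_if_dual_bounded)
  moreover have "FP \<noteq> {} \<and> bdd_below (oP ` FP) \<longrightarrow> Inf (oP ` FP) = Sup (oD ` FD)"
    unfolding FP_def FD_def oP_def oD_def using strong_duality(3) by blast
  moreover note optimal_iff_no_gap complementary_slackness(2)
  ultimately show ?thesis
    unfolding FP_def FD_def oP_def oD_def reduced_cost_x_def reduced_cost_y_def by simp
qed

end
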